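(* Let $T\subset\mathbb R^n$ be bounded. Then $\lim_{r\to+\infty}C_{\mathcal K}(T,B_r)=\mathrm{cap}_{\mathcal K}(T)$. Moreover there is $c=c(n,s,p,\alpha)>0$ such that for all $0<r<R$, $$\mathrm{cap}_{\mathcal K}(T)-\mathrm{cap}_{\mathcal K}(T,B_R;r)\le\frac{c\,r^{sp}}{(R-r)^{sp}}\,C_{\mathcal K}(T,B_r).$$
   Context: $n\ge2$, $p\in(1,\infty)$, $s\in(0,1)$, $sp\in(1,n)$. $K:\mathbb R^n\setminus\{0\}\to(0,\infty)$ is measurable with $K(tz)=t^{-(n+sp)}K(z)$ for $t>0$ and $\alpha^{-1}|z|^{-(n+sp)}\le K(z)\le\alpha|z|^{-(n+sp)}$ for some $\alpha\ge1$. For $u\in W^{s,p}(\mathbb R^n)$ and open $A$, $\mathcal K(u,A):=\int_{A\times A}K(x-y)|u(x)-u(y)|^pdxdy$, $\mathcal K(u):=\mathcal K(u,\mathbb R^n)$. $\tilde w$ is the precise representative and "q.e." means up to sets of zero $(s,p)$-capacity. $\mathrm{cap}_{\mathcal K}(T):=\inf\{\mathcal K(w):w\in W^{s,p}(\mathbb R^n),\tilde w\ge1\text{ q.e. on }T\}$; $C_{\mathcal K}(T,B_r):=\inf\{\mathcal K(w):w\in W^{s,p}(\mathbb R^n),w=0\text{ on }\mathbb R^n\setminus B_r,\tilde w\ge1\text{ q.e. on }T\}$; $\mathrm{cap}_{\mathcal K}(T,B_R;r):=\inf\{\mathcal K(w,B_R):w\in W^{s,p}(\mathbb R^n),w=0\text{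 on }\mathbb R^n\setminus B_r,\tilde w\ge1\text{ q.e. on }T\}$. $B_r$ is the open ball of radius $r$ about $0$. *)

theory Defs
  imports "HOL-Analysis.Analysis"
begin

text \<open>Functions on R^n are modelled as 'a \<Rightarrow> real with 'a a Euclidean space, n = DIM('a).
 Double integrals are Lebesgue integrals on the product space 'a \<times> 'a (itself Euclidean).\<close>

definition frac_sobolev :: "real \<Rightarrow> real \<Rightarrow> ('a::euclidean_space \<Rightarrow> real) set" where
  "frac_sobolev s p = {u. u \<in> borel_measurable lebesgue \<and>
     (\<integral>\<^sup>+ x. ennreal (\<bar>u x\<bar> powr p) \<partial>lebesgue) < \<infinity> \<and>
     (\<integral>\<^sup>+ z. ennreal (\<bar>u (fst z) - u (snd z)\<bar> powr p /
          norm (fst z - snd z) powr (real DIM('a) + s * p)) \<partial>(lebesgue :: ('a \<times> 'a) measure)) < \<infinity>}"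

definition sobolev_norm_p :: "real \<Rightarrow> real \<Rightarrow> ('a::euclidean_space \<Rightarrow> real) \<Rightarrow> ennreal" where
  "sobolev_norm_p s p u =
     (\<integral>\<^sup>+ x. ennreal (\<bar>u x\<bar> powr p) \<partial>lebesgue) +
     (\<integral>\<^sup>+ z. ennreal (\<bar>u (fst z) - u (snd z)\<bar> powr p /
          norm (fst z - snd z) powr (real DIM('a) + s * p)) \<partial>(lebesgue :: ('a \<times> 'a) measure))"

definition sp_capacity :: "real \<Rightarrow> real \<Rightarrow> ('a::euclidean_space) set \<Rightarrow> ennreal" where
  "sp_capacity s p E = Inf {sobolev_norm_p s p u | u. u \<in> frac_sobolev s p \<and>
     (\<exists>U. open U \<and> E \<subseteq> U \<and> (AE x in lebesgue. x \<in> U \<longrightarrow> u x \<ge> 1))}"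

definition qe_on :: "real \<Rightarrow> real \<Rightarrow> ('a::euclidean_space) set \<Rightarrow> ('a \<Rightarrow> bool) \<Rightarrow> bool" where
  "qe_on s p T P \<longleftrightarrow> (\<exists>N. sp_capacity s p N = 0 \<and> (\<forall>x\<in>T - N. P x))"

text \<open>Precise representative: limit of ball averages where it exists (0 elsewhere;
  this set has zero capacity for W^{s,p} functions, so the convention is irrelevant).\<close>
definition ball_avg :: "('a::euclidean_space \<Rightarrow> real) \<Rightarrow> 'a \<Rightarrow> real \<Rightarrow> real" where
  "ball_avg w x \<rho> = (\<integral> y \<in> ball x \<rho>. w y \<partial>lebesgue) / measure lebesgue (ball x \<rho>)"

definition precise_rep :: "('a::euclidean_space \<Rightarrow> real) \<Rightarrow> 'a \<Rightarrow> real" where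
  "precise_rep w x = (if (\<exists>l. (ball_avg w x \<longlongrightarrow> l) (at_right 0))
                      then Lim (at_right 0) (ball_avg w x) else 0)"

definition admissible_kernel :: "real \<Rightarrow> real \<Rightarrow> real \<Rightarrow> ('a::euclidean_space \<Rightarrow> real) \<Rightarrow> bool" where
  "admissible_kernel s p \<alpha> K \<longleftrightarrow>
     K \<in> borel_measurable lebesgue \<and>
     (\<forall>z. z \<noteq> 0 \<longrightarrow> K z > 0) \<and>
     (\<forall>z t. z \<noteq> 0 \<longrightarrow> t > 0 \<longrightarrow> K (t *\<^sub>R z) = t powr (-(real DIM('a) + s * p)) * K z) \<and>
     (\<forall>z. z \<noteq> 0 \<longrightarrow> norm z powr (-(real DIM('a) + s * p)) / \<alpha> \<le> K z \<and>
                      K z \<le> \<alpha> * norm z powr (-(real DIM('a) + s * p)))"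

definition energyK :: "('a::euclidean_space \<Rightarrow> real) \<Rightarrow> real \<Rightarrow> ('a \<Rightarrow> real) \<Rightarrow> 'a set \<Rightarrow> ennreal" where
  "energyK K p u A = (\<integral>\<^sup>+ z. indicator (A \<times> A) z *
       ennreal (K (fst z - snd z) * \<bar>u (fst z) - u (snd z)\<bar> powr p) \<partial>(lebesgue :: ('a \<times> 'a) measure))"

definition capK :: "('a::euclidean_space \<Rightarrow> real) \<Rightarrow> real \<Rightarrow> real \<Rightarrow> 'a set \<Rightarrow> ennreal" where
  "capK K s p T = Inf {energyK K p w UNIV | w. w \<in> frac_sobolev s p \<and>
       qe_on s p T (\<lambda>x. precise_rep w x \<ge> 1)}"

definition CK :: "('a::euclidean_space \<Rightarrow> real) \<Rightarrow> real \<Rightarrow> real \<Rightarrow> 'a set \<Rightarrow> real \<Rightarrow> ennreal" where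
  "CK K s p T r = Inf {energyK K p w UNIV | w. w \<in> frac_sobolev s p \<and>
       (AE x in lebesgue. x \<notin> ball 0 r \<longrightarrow> w x = 0) \<and>
       qe_on s p T (\<lambda>x. precise_rep w x \<ge> 1)}"

definition capK_rel :: "('a::euclidean_space \<Rightarrow> real) \<Rightarrow> real \<Rightarrow> real \<Rightarrow> 'a set \<Rightarrow> real \<Rightarrow> real \<Rightarrow> ennreal" where
  "capK_rel K s p T R r = Inf {energyK K p w (ball 0 R) | w. w \<in> frac_sobolev s p \<and>
       (AE x in lebesgue. x \<notin> ball 0 r \<longrightarrow> w x = 0) \<and>
       qe_on s p T (\<lambda>x. precise_rep w x \<ge> 1)}"

end

theory Submission
  imports Defs
begin

(* Since every competitor for C_K(T,B_r)
   competes for cap_K(T), only "\<le>" needs work.  Given w with K(w) < a, we multiply w by the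
   radial cutoff \<phi>_R = max 0 (min 1 (2 - |x|/R)).  Splitting
   \<phi>_R(x)w(x) - \<phi>_R(y)w(y) = \<phi>_R(x)(w(x)-w(y)) + w(y)(\<phi>_R(x)-\<phi>_R(y)) with a weighted convexity
   inequality gives K(\<phi>_R w) \<le> l^(1-p) K(w) + c (1-l)^(1-p) R^(-sp) \<parallel>w\<parallel>_p^p, which is < a for l
   close to 1 and R large.  For B_R \<supseteq> T, \<phi>_R w has the same precise representative on T
   and vanishes outside B_(2R), so it competes for C_K(T,B_r) whenever r \<ge> 2R.

   Part 2 (the quantitative bound) rests on a localisation estimate: for v vanishing outside
   B_r with 2r \<le> R, the interaction of B_r with the complement of B_R is bounded by
   c (R-r)^(-sp) \<parallel>v\<parallel>_p^p, while the interaction of B_r with the annulus B_(2r) - B_r is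
   bounded below by c' r^(-sp) \<parallel>v\<parallel>_p^p; hence K(v) \<le> (1 + C r^sp/(R-r)^sp) K(v,B_R), and so
   cap_K(T) \<le> (1 + C\<theta>) cap_K(T,B_R;r).  For R < 2r the ratio \<theta> is at least 1 and the bound
   follows from cap_K(T) \<le> C_K(T,B_r). *)

section \<open>Measure-theoretic tools\<close>

text \<open>The integrands K(x - y)|u(x) - u(y)|^p need not be measurable on the product space,
  so we need subadditivity and homogeneity of the lower integral without measurability of
  the majorised function.  All three lemmas reduce to measurable minorants.\<close>

lemma nn_integral_le_by_measurable:
  assumes "\<And>h. h \<in> borel_measurable M \<Longrightarrow> (\<And>x. h x \<le> f x) \<Longrightarrow> integral\<^sup>N M h \<le> X"
  shows "integral\<^sup>N M f \<le> X"
  unfolding nn_integral_def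
proof (rule SUP_least)
  fix s assume "s \<in> {g. simple_function M g \<and> g \<le> f}"
  then have s: "simple_function M s" "s \<le> f" by auto
  have "integral\<^sup>S M s = integral\<^sup>N M s" using s(1) by (simp add: nn_integral_eq_simple_integral)
  also have "\<dots> \<le> X" using assms[of s] s borel_measurable_simple_function[OF s(1)] by (auto simp: le_fun_def)
  finally show "integral\<^sup>S M s \<le> X" .
qed

lemma nn_integral_add_le:
  assumes g: "g \<in> borel_measurable M"
  shows "(\<integral>\<^sup>+x. f x + g x \<partial>M) \<le> integral\<^sup>N M f + integral\<^sup>N M g"
proof (rule nn_integral_le_by_measurable)
  fix h assume h: "h \<in> borel_measurable M" "\<And>x. h x \<le> f x + g x"
  define h' where "h' x = (if g x = top then 0 else h x - g x)" for x
  have hm: "h' \<in> borel_measurable M" unfolding h'_def using h g by measurable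
  have "integral\<^sup>N M h \<le> (\<integral>\<^sup>+x. h' x + g x \<partial>M)"
  proof (intro nn_integral_mono)
    fix x show "h x \<le> h' x + g x"
      by (cases "g x = top") (auto simp: h'_def diff_add_self_ennreal)
  qed
  also have "\<dots> = integral\<^sup>N M h' + integral\<^sup>N M g"
    using hm g by (intro nn_integral_add) auto
  also have "integral\<^sup>N M h' \<le> integral\<^sup>N M f"
  proof (intro nn_integral_mono)
    fix x show "h' x \<le> f x"
      using h(2)[of x] by (cases "g x = top") (auto simp: h'_def ennreal_minus_le_iff add.commute)
  qed
  finally show "integral\<^sup>N M h \<le> integral\<^sup>N M f + integral\<^sup>N M g" by (simp add: add_right_mono order_trans)
qed

lemma nn_integral_cmult_le:
  assumes c: "c \<noteq> (top::ennreal)"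
  shows "(\<integral>\<^sup>+x. c * f x \<partial>M) \<le> c * integral\<^sup>N M f"
proof (cases "c = 0")
  case True then show ?thesis by simp
next
  case False
  show ?thesis
  proof (rule nn_integral_le_by_measurable)
    fix h assume h: "h \<in> borel_measurable M" "\<And>x. h x \<le> c * f x"
    have "integral\<^sup>N M h = (\<integral>\<^sup>+x. c * (h x / c) \<partial>M)"
      using False c by (intro nn_integral_cong) (metis ennreal_times_divide ennreal_mult_divide_eq mult.commute)
    also have "\<dots> = c * (\<integral>\<^sup>+x. h x / c \<partial>M)" using h by (intro nn_integral_cmult) auto
    also have "(\<integral>\<^sup>+x. h x / c \<partial>M) \<le> integral\<^sup>N M f"
      using h(2) False c by (intro nn_integral_mono) (metis divide_right_mono_ennreal ennreal_mult_divide_eq mult.commute)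
    finally show "integral\<^sup>N M h \<le> c * integral\<^sup>N M f" by (simp add: mult_left_mono)
  qed
qed

lemma tonelli_snd:
  fixes f :: "('a::euclidean_space \<times> 'a) \<Rightarrow> ennreal"
  assumes f: "f \<in> borel_measurable borel"
  shows "(\<integral>\<^sup>+z. f z \<partial>(lebesgue :: ('a \<times> 'a) measure)) = (\<integral>\<^sup>+y. \<integral>\<^sup>+x. f (x,y) \<partial>lborel \<partial>lborel)"
proof -
  have fm: "f \<in> borel_measurable (lborel \<Otimes>\<^sub>M lborel)"
    using f by (simp add: lborel_prod)
  have "(\<integral>\<^sup>+z. f z \<partial>(lebesgue :: ('a \<times> 'a) measure)) = (\<integral>\<^sup>+z. f z \<partial>(lborel \<Otimes>\<^sub>M lborel))"
    by (simp add: nn_integral_completion lborel_prod)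
  also have "\<dots> = (\<integral>\<^sup>+y. \<integral>\<^sup>+x. f (x,y) \<partial>lborel \<partial>lborel)"
    by (rule lborel_pair.nn_integral_snd[OF fm, symmetric])
  finally show ?thesis .
qed

lemma tonelli_fst:
  fixes f :: "('a::euclidean_space \<times> 'a) \<Rightarrow> ennreal"
  assumes f: "f \<in> borel_measurable borel"
  shows "(\<integral>\<^sup>+z. f z \<partial>(lebesgue :: ('a \<times> 'a) measure)) = (\<integral>\<^sup>+x. \<integral>\<^sup>+y. f (x,y) \<partial>lborel \<partial>lborel)"
proof -
  have fm: "f \<in> borel_measurable (lborel \<Otimes>\<^sub>M lborel)"
    using f by (simp add: lborel_prod)
  have "(\<integral>\<^sup>+z. f z \<partial>(lebesgue :: ('a \<times> 'a) measure)) = (\<integral>\<^sup>+z. f z \<partial>(lborel \<Otimes>\<^sub>M lborel))"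
    by (simp add: nn_integral_completion lborel_prod)
  also have "\<dots> = (\<integral>\<^sup>+x. \<integral>\<^sup>+y. f (x,y) \<partial>lborel \<partial>lborel)"
    by (rule lborel.nn_integral_fst[OF fm, symmetric])
  finally show ?thesis .
qed

lemma swap_borel_measurable: "prod.swap \<in> borel \<rightarrow>\<^sub>M (borel :: ('a::euclidean_space \<times> 'a) measure)"
  by (intro borel_measurable_continuous_onI continuous_intros)

lemma nn_integral_pair_swap:
  fixes f :: "('a::euclidean_space \<times> 'a) \<Rightarrow> ennreal"
  assumes f: "f \<in> borel_measurable borel"
  shows "(\<integral>\<^sup>+z. f (prod.swap z) \<partial>(lebesgue :: ('a \<times> 'a) measure)) = integral\<^sup>N lebesgue f"
proof -
  have "(\<lambda>z. f (prod.swap z)) \<in> borel_measurable borel"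
    using swap_borel_measurable f by (rule measurable_compose)
  then have "(\<integral>\<^sup>+z. f (prod.swap z) \<partial>(lebesgue :: ('a \<times> 'a) measure)) = (\<integral>\<^sup>+x. \<integral>\<^sup>+y. f (y, x) \<partial>lborel \<partial>lborel)"
    by (simp add: tonelli_fst)
  also have "\<dots> = integral\<^sup>N lebesgue f"
    using f by (rule tonelli_snd[symmetric])
  finally show ?thesis .
qed

lemma AE_pair_notin:
  fixes N :: "'a::euclidean_space set"
  assumes N: "N \<in> null_sets lborel"
  shows "AE z in (lebesgue :: ('a \<times> 'a) measure). fst z \<notin> N \<and> snd z \<notin> N"
proof -
  have "N \<times> UNIV \<in> null_sets (lborel \<Otimes>\<^sub>M (lborel::'a measure))"
    using N by (intro lborel.times_in_null_sets1) auto
  moreover have "UNIV \<times> N \<in> null_sets (lborel \<Otimes>\<^sub>M (lborel::'a measure))"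
    using N by (intro lborel.times_in_null_sets2) auto
  ultimately have "N \<times> UNIV \<union> UNIV \<times> N \<in> null_sets (lborel :: ('a \<times> 'a) measure)"
    by (auto simp: lborel_prod intro!: null_sets.Un)
  then have "AE z in (lborel :: ('a \<times> 'a) measure). z \<notin> N \<times> UNIV \<union> UNIV \<times> N"
    by (rule AE_not_in)
  then have "AE z in (lebesgue :: ('a \<times> 'a) measure). z \<notin> N \<times> UNIV \<union> UNIV \<times> N"
    by (rule AE_completion)
  then show ?thesis by (rule AE_mp) (auto intro!: AE_I2 simp: mem_Times_iff)
qed

lemma borel_version:
  fixes w :: "'a::euclidean_space \<Rightarrow> real"
  assumes "w \<in> borel_measurable lebesgue"
  obtains w' N where "w' \<in> borel_measurable borel" "N \<in> null_sets lborel" "\<And>x. x \<notin> N \<Longrightarrow> w x = w' x"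
proof -
  obtain w' where w': "w' \<in> borel_measurable lborel" "AE x in lborel. w x = w' x"
    using completion_ex_borel_measurable_real[OF assms] by blast
  from w'(2) obtain N where "N \<in> null_sets lborel" "{x \<in> space lborel. w x \<noteq> w' x} \<subseteq> N"
    unfolding eventually_ae_filter by blast
  then show ?thesis using that[of w' N] w'(1) by auto
qed

lemma borel_version_supported:
  fixes w :: "'a::euclidean_space \<Rightarrow> real"
  assumes wm: "w \<in> borel_measurable lebesgue" and supp: "AE x in lebesgue. x \<notin> ball 0 r \<longrightarrow> w x = 0"
  obtains v N where "v \<in> borel_measurable borel" "N \<in> null_sets lborel" "\<And>x. x \<notin> N \<Longrightarrow> w x = v x"
    "\<And>x. r \<le> norm x \<Longrightarrow> v x = 0"
proof -
  obtain w' N1 where w'[measurable]: "w' \<in> borel_measurable borel" and N1: "N1 \<in> null_sets lborel"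
    and ww: "\<And>x. x \<notin> N1 \<Longrightarrow> w x = w' x"
    using borel_version[OF wm] by blast
  have "AE x in lborel. x \<notin> ball 0 r \<longrightarrow> w x = 0" using supp by (simp add: AE_completion_iff)
  then obtain N2 where N2: "N2 \<in> null_sets lborel" "{x \<in> space lborel. \<not> (x \<notin> ball 0 r \<longrightarrow> w x = 0)} \<subseteq> N2"
    unfolding eventually_ae_filter by blast
  define v where "v x = indicator {x::'a. norm x < r} x * w' x" for x
  have "v \<in> borel_measurable borel" unfolding v_def by measurable
  moreover have "N1 \<union> N2 \<in> null_sets lborel" using N1 N2 by auto
  moreover have "w x = v x" if "x \<notin> N1 \<union> N2" for x
  proof (cases "norm x < r")
    case True then show ?thesis using that ww by (simp add: v_def)
  next
    case False
    then have "w x = 0" using that N2(2) by auto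
    then show ?thesis using False by (simp add: v_def)
  qed
  moreover have "v x = 0" if "r \<le> norm x" for x using that by (simp add: v_def)
  ultimately show ?thesis using that by blast
qed

lemma nn_integral_translate:
  fixes f :: "'a::euclidean_space \<Rightarrow> ennreal"
  assumes f: "f \<in> borel_measurable borel"
  shows "(\<integral>\<^sup>+x. f (x - y) \<partial>lborel) = (\<integral>\<^sup>+z. f z \<partial>lborel)"
proof -
  have "(\<integral>\<^sup>+z. f z \<partial>lborel) = (\<integral>\<^sup>+z. f z \<partial>(distr lborel borel ((+) (-y))))"
    by (simp add: lborel_distr_plus)
  also have "\<dots> = (\<integral>\<^sup>+x. f (-y + x) \<partial>lborel)"
    using f by (subst nn_integral_distr) auto
  finally show ?thesis by simp
qed

section \<open>Elementary inequalities\<close>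

lemma convex_split:
  fixes a b l p :: real
  assumes "0 < l" "l < 1" "1 \<le> p"
  shows "\<bar>a + b\<bar> powr p \<le> l powr (1 - p) * \<bar>a\<bar> powr p + (1 - l) powr (1 - p) * \<bar>b\<bar> powr p"
proof -
  have mono: "\<bar>a + b\<bar> powr p \<le> (\<bar>a\<bar> + \<bar>b\<bar>) powr p"
    using assms by (intro powr_mono2) auto
  have gen: "x powr (1 - p) \<ge> 1" if "0 < x" "x < 1" for x
  proof -
    have "x powr (p - 1) \<le> 1" "x powr (p - 1) > 0" using that assms by (auto intro!: powr_le1)
    moreover have "x powr (1 - p) = inverse (x powr (p - 1))"
      by (metis minus_diff_eq powr_minus)
    ultimately show ?thesis by (simp add: one_le_inverse)
  qed
  have l1: "l powr (1 - p) \<ge> 1" using assms gen by auto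
  have l2: "(1 - l) powr (1 - p) \<ge> 1" using assms gen by auto
  consider "a = 0" | "b = 0" | "a \<noteq> 0" "b \<noteq> 0" by blast
  then show ?thesis
  proof cases
    case 1
    then show ?thesis using l2 by (auto intro!: order_trans[OF _ mult_right_mono[OF l2]])
  next
    case 2
    then show ?thesis using l1 by (auto intro!: order_trans[OF _ mult_right_mono[OF l1]])
  next
    case 3
    let ?x = "\<bar>a\<bar> / l" and ?y = "\<bar>b\<bar> / (1 - l)"
    have cv: "convex_on {0<..} (\<lambda>x. x powr p)" using assms(3) by (rule powr_convex)
    have xy: "?x \<in> {0<..}" "?y \<in> {0<..}" using 3 assms by auto
    have "(l * ?x + (1 - l) * ?y) powr p \<le> l * ?x powr p + (1 - l) * ?y powr p"
      using convex_onD[OF cv, of "1 - l" ?x ?y] xy assms by auto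
    moreover have "l * ?x + (1 - l) * ?y = \<bar>a\<bar> + \<bar>b\<bar>" using assms by auto
    moreover have "l * ?x powr p = l powr (1 - p) * \<bar>a\<bar> powr p"
      using assms by (simp add: powr_divide powr_diff field_simps)
    moreover have "(1 - l) * ?y powr p = (1 - l) powr (1 - p) * \<bar>b\<bar> powr p"
      using assms by (simp add: powr_divide powr_diff field_simps)
    ultimately show ?thesis using mono by auto
  qed
qed

lemma product_difference_bound:
  fixes \<phi>x \<phi>y a b l p :: real
  assumes \<phi>: "\<bar>\<phi>x\<bar> \<le> 1" and l: "0 < l" "l < 1" and p: "1 \<le> p"
  shows "\<bar>\<phi>x * a - \<phi>y * b\<bar> powr p
     \<le> l powr (1 - p) * \<bar>a - b\<bar> powr p + (1 - l) powr (1 - p) * (\<bar>b\<bar> powr p * \<bar>\<phi>x - \<phi>y\<bar> powr p)"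
proof -
  have split: "\<phi>x * a - \<phi>y * b = \<phi>x * (a - b) + b * (\<phi>x - \<phi>y)" by (simp add: algebra_simps)
  have first: "\<bar>\<phi>x * (a - b)\<bar> powr p \<le> \<bar>a - b\<bar> powr p"
    using \<phi> p by (intro powr_mono2) (auto simp: abs_mult intro: mult_left_le_one_le)
  have second: "\<bar>b * (\<phi>x - \<phi>y)\<bar> powr p = \<bar>b\<bar> powr p * \<bar>\<phi>x - \<phi>y\<bar> powr p"
    by (simp add: abs_mult powr_mult)
  have "\<bar>\<phi>x * a - \<phi>y * b\<bar> powr p
      \<le> l powr (1 - p) * \<bar>\<phi>x * (a - b)\<bar> powr p + (1 - l) powr (1 - p) * \<bar>b * (\<phi>x - \<phi>y)\<bar> powr p"
    unfolding split by (rule convex_split[OF l p])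
  also have "\<dots> \<le> l powr (1 - p) * \<bar>a - b\<bar> powr p + (1 - l) powr (1 - p) * (\<bar>b\<bar> powr p * \<bar>\<phi>x - \<phi>y\<bar> powr p)"
    unfolding second using first by (intro add_right_mono mult_left_mono) auto
  finally show ?thesis .
qed

lemma dyadic_exists:
  fixes x :: real assumes "1 \<le> x"
  shows "\<exists>k::nat. 2 ^ k \<le> x \<and> x < 2 ^ Suc k"
proof (intro exI conjI)
  let ?k = "nat \<lfloor>log 2 x\<rfloor>"
  have "0 \<le> \<lfloor>log 2 x\<rfloor>" using assms by simp
  then have e: "real_of_int \<lfloor>log 2 x\<rfloor> = real ?k" by simp
  have k: "2 powr real ?k \<le> x" "x < 2 powr (real ?k + 1)"
    using floor_log_eq_powr_iff[of x 2 "\<lfloor>log 2 x\<rfloor>"] assms unfolding e by auto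
  show "2 ^ ?k \<le> x" using k(1) by (simp add: powr_realpow)
  show "x < 2 ^ Suc ?k" using k(2) by (simp add: powr_add powr_realpow)
qed

lemma ennreal_le_suminf: "(f::nat \<Rightarrow> ennreal) k \<le> suminf f"
proof -
  have "f k \<le> sum f {..<Suc k}" by (intro member_le_sum) auto
  also have "\<dots> \<le> suminf f" by (intro sum_le_suminf summableI) auto
  finally show ?thesis .
qed

lemma geom_ennreal:
  fixes A q :: real
  assumes "0 \<le> A" "0 \<le> q" "q < 1"
  shows "(\<Sum>k. ennreal (A * q ^ k)) = ennreal (A / (1 - q))"
proof -
  have "(\<lambda>k. A * q ^ k) sums (A * (1 / (1 - q)))"
    using assms by (intro sums_mult geometric_sums) auto
  then show ?thesis using assms by (subst suminf_ennreal_eq) auto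
qed

lemma le_mult_Inf:
  fixes a k :: ennreal
  assumes k: "0 < k" "k < top" and le: "\<And>x. x \<in> S \<Longrightarrow> a \<le> k * x"
  shows "a \<le> k * Inf S"
proof -
  have "a / k \<le> Inf S"
  proof (rule Inf_greatest)
    fix x assume "x \<in> S"
    then have "a / k \<le> (k * x) / k" using le by (intro divide_right_mono_ennreal) auto
    also have "\<dots> = x" using k by (metis ennreal_mult_divide_eq mult.commute not_less_zero top.not_eq_extremum)
    finally show "a / k \<le> x" .
  qed
  then have "(a / k) * k \<le> Inf S * k" by (rule mult_right_mono) simp
  moreover have "(a / k) * k = a" using k
    by (metis ennreal_mult_divide_eq ennreal_times_divide mult.commute not_less_zero top.not_eq_extremum)
  ultimately show ?thesis by (simp add: mult.commute)
qed

section \<open>Integrals of radial power functions\<close>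

text \<open>Decomposing R^n into dyadic annuli gives explicit (non-optimal) bounds for the tail
  integral of |z|^(-n-t) outside B_\<rho> and the integral of |z|^(b-n) inside B_\<rho>, with
  the common constant below.\<close>

definition dyadic_const :: "nat \<Rightarrow> real \<Rightarrow> real" where
  "dyadic_const n t = unit_ball_vol (real n) * 2 ^ n / (1 - 2 powr (-t))"

lemma dyadic_const_nonneg: "0 < t \<Longrightarrow> 0 \<le> dyadic_const n t"
  unfolding dyadic_const_def
  by (intro divide_nonneg_pos mult_nonneg_nonneg unit_ball_vol_nonneg) (auto intro!: powr_less_one)

text \<open>Tail bound: \<integral>_{|z| \<ge> \<rho>} |z|^(-n-t) dz \<le> c \<rho>^(-t), by bounding the integrand on the
  shell 2^k\<rho> \<le> |z| < 2^(k+1)\<rho> by its value at the inner radius.\<close>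

lemma tail_integral:
  fixes t \<rho> :: real
  assumes t: "0 < t" and \<rho>: "0 < \<rho>"
  shows "(\<integral>\<^sup>+z. indicator {z::'a::euclidean_space. \<rho> \<le> norm z} z * ennreal (norm z powr (-(real DIM('a) + t))) \<partial>lborel)
         \<le> ennreal (dyadic_const DIM('a) t * \<rho> powr (-t))"
proof -
  let ?n = "real DIM('a)"
  define r where "r k = 2 ^ k * \<rho>" for k :: nat
  have rpos: "r k > 0" for k using \<rho> by (simp add: r_def)
  define f where "f k z = indicator {z::'a. norm z \<le> r (Suc k)} z * ennreal (r k powr (-(?n + t)))" for k z
  have pt: "indicator {z::'a. \<rho> \<le> norm z} z * ennreal (norm z powr (-(?n + t))) \<le> (\<Sum>k. f k z)" for z
  proof (cases "\<rho> \<le> norm z")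
    case True
    then have "1 \<le> norm z / \<rho>" using \<rho> by simp
    then obtain k :: nat where k: "2 ^ k \<le> norm z / \<rho>" "norm z / \<rho> < 2 ^ Suc k"
      using dyadic_exists by blast
    have k1: "r k \<le> norm z" "norm z \<le> r (Suc k)"
      using k \<rho> by (auto simp: r_def field_simps)
    have "norm z powr (-(?n + t)) \<le> r k powr (-(?n + t))"
      using k1 rpos[of k] t by (intro powr_mono2') auto
    then have "indicator {z::'a. \<rho> \<le> norm z} z * ennreal (norm z powr (-(?n + t))) \<le> f k z"
      using True k1 by (auto simp: f_def intro!: ennreal_leI)
    also have "\<dots> \<le> (\<Sum>k. f k z)" by (rule ennreal_le_suminf)
    finally show ?thesis .
  qed simp
  have "(\<integral>\<^sup>+z. indicator {z::'a. \<rho> \<le> norm z} z * ennreal (norm z powr (-(?n + t))) \<partial>lborel)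
        \<le> (\<integral>\<^sup>+z. (\<Sum>k. f k z) \<partial>lborel)"
    by (intro nn_integral_mono pt)
  also have "\<dots> = (\<Sum>k. integral\<^sup>N lborel (f k))"
    by (intro nn_integral_suminf) (unfold f_def, measurable)
  also have "\<dots> = (\<Sum>k. ennreal (unit_ball_vol ?n * 2 ^ DIM('a) * \<rho> powr (-t) * (2 powr (-t)) ^ k))"
  proof (intro suminf_cong)
    fix k
    have cb: "{z::'a. norm z \<le> r (Suc k)} = cball 0 (r (Suc k))" by auto
    have "integral\<^sup>N lborel (f k) = ennreal (r k powr (-(?n + t))) * emeasure lborel (cball (0::'a) (r (Suc k)))"
      unfolding f_def cb by (subst mult.commute) (simp add: nn_integral_cmult_indicator)
    also have "\<dots> = ennreal (r k powr (-(?n + t)) * (unit_ball_vol ?n * r (Suc k) ^ DIM('a)))"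
      using rpos[of "Suc k"] by (simp add: emeasure_cball ennreal_mult' unit_ball_vol_nonneg)
    also have "r k powr (-(?n + t)) * (unit_ball_vol ?n * r (Suc k) ^ DIM('a))
        = unit_ball_vol ?n * 2 ^ DIM('a) * \<rho> powr (-t) * (2 powr (-t)) ^ k"
    proof -
      have a: "r (Suc k) ^ DIM('a) = 2 ^ DIM('a) * r k powr ?n"
        using rpos[of k] by (simp add: r_def powr_realpow power_mult_distrib)
      have b: "r k powr (-(?n + t)) * r k powr ?n = r k powr (-t)"
        by (simp add: powr_add[symmetric])
      have c: "r k powr (-t) = \<rho> powr (-t) * (2 powr (-t)) ^ k"
        using \<rho> by (simp add: r_def powr_mult powr_realpow[symmetric] powr_powr
                  flip: powr_power) (simp add: mult.commute)
      show ?thesis using a b c by (metis (no_types, lifting) mult.assoc mult.commute)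
    qed
    finally show "integral\<^sup>N lborel (f k) = ennreal (unit_ball_vol ?n * 2 ^ DIM('a) * \<rho> powr (-t) * (2 powr (-t)) ^ k)" .
  qed
  also have "\<dots> = ennreal (unit_ball_vol ?n * 2 ^ DIM('a) * \<rho> powr (-t) / (1 - 2 powr (-t)))"
    using t by (intro geom_ennreal) (auto simp: unit_ball_vol_nonneg intro!: powr_less_one)
  finally show ?thesis by (simp add: dyadic_const_def field_simps)
qed

text \<open>Inner bound: \<integral>_{|z| < \<rho>} |z|^(b-n) dz \<le> c \<rho>^b, using the shells \<rho>/2^(k+1) \<le> |z| \<le> \<rho>/2^k.\<close>

lemma inner_integral:
  fixes b \<rho> :: real
  assumes b: "0 < b" and \<rho>: "0 < \<rho>"
  shows "(\<integral>\<^sup>+z. indicator {z::'a::euclidean_space. norm z < \<rho>} z * ennreal (norm z powr (b - real DIM('a))) \<partial>lborel)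
         \<le> ennreal (dyadic_const DIM('a) b * \<rho> powr b)"
proof -
  let ?n = "real DIM('a)"
  define r where "r k = \<rho> / 2 ^ k" for k :: nat
  have rpos: "r k > 0" for k using \<rho> by (simp add: r_def)
  define f where "f k z = indicator {z::'a. norm z \<le> r k} z * ennreal (2 ^ DIM('a) * r k powr (b - ?n))" for k z
  have pt: "indicator {z::'a. norm z < \<rho>} z * ennreal (norm z powr (b - ?n)) \<le> (\<Sum>k. f k z)" for z
  proof (cases "norm z < \<rho> \<and> z \<noteq> 0")
    case True
    then have "1 \<le> \<rho> / norm z" using \<rho> by simp
    then obtain k :: nat where k: "2 ^ k \<le> \<rho> / norm z" "\<rho> / norm z < 2 ^ Suc k"
      using dyadic_exists by blast
    have nz: "norm z > 0" using True by auto
    have k1: "norm z \<le> r k" "r k / 2 \<le> norm z"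
      using k \<rho> nz by (auto simp: r_def field_simps)
    have "norm z powr (b - ?n) = norm z powr b * norm z powr (- ?n)"
      by (simp add: powr_add[symmetric])
    also have "\<dots> \<le> r k powr b * (r k / 2) powr (- ?n)"
      using k1 nz b rpos[of k]
      by (intro mult_mono powr_mono2 powr_mono2') auto
    also have "\<dots> = 2 ^ DIM('a) * r k powr (b - ?n)"
      using rpos[of k] by (simp add: powr_divide powr_minus_divide powr_add powr_realpow field_simps powr_diff)
    finally have le: "norm z powr (b - ?n) \<le> 2 ^ DIM('a) * r k powr (b - ?n)" .
    then have "indicator {z::'a. norm z < \<rho>} z * ennreal (norm z powr (b - ?n)) \<le> f k z"
      using True k1 by (auto simp: f_def intro!: ennreal_leI)
    also have "\<dots> \<le> (\<Sum>k. f k z)" by (rule ennreal_le_suminf)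
    finally show ?thesis .
  qed auto
  have "(\<integral>\<^sup>+z. indicator {z::'a. norm z < \<rho>} z * ennreal (norm z powr (b - ?n)) \<partial>lborel)
        \<le> (\<integral>\<^sup>+z. (\<Sum>k. f k z) \<partial>lborel)"
    by (intro nn_integral_mono pt)
  also have "\<dots> = (\<Sum>k. integral\<^sup>N lborel (f k))"
    by (intro nn_integral_suminf) (unfold f_def, measurable)
  also have "\<dots> = (\<Sum>k. ennreal (unit_ball_vol ?n * 2 ^ DIM('a) * \<rho> powr b * (2 powr (-b)) ^ k))"
  proof (intro suminf_cong)
    fix k
    have cb: "{z::'a. norm z \<le> r k} = cball 0 (r k)" by auto
    have "integral\<^sup>N lborel (f k) = ennreal (2 ^ DIM('a) * r k powr (b - ?n)) * emeasure lborel (cball (0::'a) (r k))"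
      unfolding f_def cb by (subst mult.commute) (simp add: nn_integral_cmult_indicator)
    also have "\<dots> = ennreal (2 ^ DIM('a) * r k powr (b - ?n) * (unit_ball_vol ?n * r k ^ DIM('a)))"
      using rpos[of k] by (simp add: emeasure_cball ennreal_mult' unit_ball_vol_nonneg)
    also have "2 ^ DIM('a) * r k powr (b - ?n) * (unit_ball_vol ?n * r k ^ DIM('a))
        = unit_ball_vol ?n * 2 ^ DIM('a) * \<rho> powr b * (2 powr (-b)) ^ k"
    proof -
      have a: "r k ^ DIM('a) = r k powr ?n"
        using rpos[of k] by (simp add: powr_realpow)
      have bb: "r k powr (b - ?n) * r k powr ?n = r k powr b"
        by (simp add: powr_add[symmetric])
      have c: "r k powr b = \<rho> powr b * (2 powr (-b)) ^ k"
        using \<rho> by (simp add: r_def powr_divide powr_realpow[symmetric] powr_powr powr_minus_divide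
                  flip: powr_power)
      show ?thesis using a bb c by (metis (no_types, lifting) mult.assoc mult.commute)
    qed
    finally show "integral\<^sup>N lborel (f k) = ennreal (unit_ball_vol ?n * 2 ^ DIM('a) * \<rho> powr b * (2 powr (-b)) ^ k)" .
  qed
  also have "\<dots> = ennreal (unit_ball_vol ?n * 2 ^ DIM('a) * \<rho> powr b / (1 - 2 powr (-b)))"
    using b by (intro geom_ennreal) (auto simp: unit_ball_vol_nonneg intro!: powr_less_one)
  finally show ?thesis by (simp add: dyadic_const_def field_simps)
qed

lemma shifted_tail:
  fixes t r R :: real and y :: "'a::euclidean_space"
  assumes t: "0 < t" and "0 < r" "r < R" "norm y < r"
  shows "(\<integral>\<^sup>+x. indicator {x::'a. R \<le> norm x} x * ennreal (norm (x - y) powr (-(real DIM('a) + t))) \<partial>lborel)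
         \<le> ennreal (dyadic_const DIM('a) t * (R - r) powr (-t))"
proof -
  let ?g = "\<lambda>z::'a. indicator {z::'a. R - r \<le> norm z} z * ennreal (norm z powr (-(real DIM('a) + t)))"
  have "(\<integral>\<^sup>+x. indicator {x::'a. R \<le> norm x} x * ennreal (norm (x - y) powr (-(real DIM('a) + t))) \<partial>lborel)
        \<le> (\<integral>\<^sup>+x. ?g (x - y) \<partial>lborel)"
  proof (intro nn_integral_mono)
    fix x :: 'a
    have "R \<le> norm x \<Longrightarrow> R - r \<le> norm (x - y)"
      using assms norm_triangle_ineq2[of x y] by auto
    then show "indicator {x::'a. R \<le> norm x} x * ennreal (norm (x - y) powr (-(real DIM('a) + t))) \<le> ?g (x - y)"
      by (auto simp: indicator_def)
  qed
  also have "\<dots> = integral\<^sup>N lborel ?g"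
    by (intro nn_integral_translate) measurable
  also have "\<dots> \<le> ennreal (dyadic_const DIM('a) t * (R - r) powr (-t))"
    using assms by (intro tail_integral) auto
  finally show ?thesis .
qed

section \<open>The radial cutoff function\<close>

definition cutoff :: "real \<Rightarrow> 'a::euclidean_space \<Rightarrow> real" where
  "cutoff R x = max 0 (min 1 (2 - norm x / R))"

lemma cutoff_bounds: "0 \<le> cutoff R x" "cutoff R x \<le> 1"
  by (auto simp: cutoff_def)

lemma cutoff_one: "0 < R \<Longrightarrow> norm x \<le> R \<Longrightarrow> cutoff R x = 1"
proof -
  assume "0 < R" "norm x \<le> R"
  then have "norm x / R \<le> 1" by simp
  then show ?thesis by (simp add: cutoff_def)
qed

lemma cutoff_zero: "0 < R \<Longrightarrow> 2 * R \<le> norm x \<Longrightarrow> cutoff R x = 0"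
proof -
  assume "0 < R" "2 * R \<le> norm x"
  then have "2 \<le> norm x / R" by (simp add: le_divide_eq)
  then show ?thesis by (simp add: cutoff_def)
qed

lemma cutoff_lip: "0 < R \<Longrightarrow> \<bar>cutoff R x - cutoff R y\<bar> \<le> norm (x - y) / R"
proof -
  assume R: "0 < R"
  have "\<bar>max 0 (min 1 a) - max 0 (min 1 b)\<bar> \<le> \<bar>a - b\<bar>" for a b :: real
    by (auto simp: max_def min_def)
  then have "\<bar>cutoff R x - cutoff R y\<bar> \<le> \<bar>(2 - norm x / R) - (2 - norm y / R)\<bar>"
    unfolding cutoff_def by blast
  also have "\<dots> = \<bar>(norm x - norm y) / R\<bar>" by (simp add: diff_divide_distrib)
  also have "\<dots> = \<bar>norm x - norm y\<bar> / R" using R by simp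
  also have "\<dots> \<le> norm (x - y) / R" using R by (intro divide_right_mono norm_triangle_ineq3) auto
  finally show ?thesis .
qed

lemma cutoff_borel[measurable]: "cutoff R \<in> borel_measurable borel"
  unfolding cutoff_def by measurable

lemma cutoff_lebesgue[measurable]: "cutoff R \<in> borel_measurable lebesgue"
  by (rule measurable_completion) (simp add: measurable_lborel1)

text \<open>Pointwise: near the diagonal the Lipschitz bound |\<phi>_R(x) - \<phi>_R(y)| \<le> |x - y|/R gains
  the factor |x - y|^p; far from it |\<phi>_R(x) - \<phi>_R(y)| \<le> 1.\<close>

lemma cutoff_difference_bound:
  fixes p t R :: real and x y :: "'a::euclidean_space"
  assumes t: "0 < t" "t < p" and R: "0 < R"
  shows "ennreal (\<bar>cutoff R x - cutoff R y\<bar> powr p * norm (x - y) powr (-(real DIM('a) + t)))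
     \<le> ennreal (R powr (-p)) * (indicator {z::'a. norm z < R} (x - y) * ennreal (norm (x - y) powr ((p - t) - real DIM('a)))) + indicator {z::'a. R \<le> norm z} (x - y) * ennreal (norm (x - y) powr (-(real DIM('a) + t)))"
proof -
  let ?n = "real DIM('a)"
  let ?g1 = "\<lambda>z::'a. indicator {z::'a. norm z < R} z * ennreal (norm z powr ((p - t) - ?n))"
  let ?g2 = "\<lambda>z::'a. indicator {z::'a. R \<le> norm z} z * ennreal (norm z powr (-(?n + t)))"
  let ?d = "norm (x - y)"
  have lip: "\<bar>cutoff R x - cutoff R y\<bar> \<le> ?d / R" using cutoff_lip[OF R] .
  have le1: "\<bar>cutoff R x - cutoff R y\<bar> \<le> 1"
    using cutoff_bounds[of R x] cutoff_bounds[of R y] by auto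
  show ?thesis
  proof (cases "?d < R")
    case True
    show ?thesis
    proof (cases "x = y")
      case True then show ?thesis by simp
    next
      case False
      then have dpos: "?d > 0" by simp
      have "\<bar>cutoff R x - cutoff R y\<bar> powr p * ?d powr (-(?n + t)) \<le> (?d / R) powr p * ?d powr (-(?n + t))"
        using lip t by (intro mult_right_mono powr_mono2) auto
      also have "\<dots> = R powr (-p) * ?d powr ((p - t) - ?n)"
      proof -
        have e1: "(?d / R) powr p = ?d powr p * R powr (-p)"
          using dpos R by (subst powr_divide) (auto simp: powr_minus_divide)
        have e2: "(p - t) - ?n = p + (-(?n + t))" by simp
        have e3: "?d powr p * ?d powr (-(?n + t)) = ?d powr ((p - t) - ?n)"
          unfolding e2 by (simp add: powr_add)
        show ?thesis unfolding e1 e3[symmetric] by (simp add: mult_ac)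
      qed
      finally have le: "\<bar>cutoff R x - cutoff R y\<bar> powr p * ?d powr (-(?n + t)) \<le> R powr (-p) * ?d powr ((p - t) - ?n)" .
      have g1: "?g1 (x - y) = ennreal (?d powr ((p - t) - ?n))" using True by (simp add: indicator_def)
      have "ennreal (\<bar>cutoff R x - cutoff R y\<bar> powr p * ?d powr (-(?n + t))) \<le> ennreal (R powr (-p) * ?d powr ((p - t) - ?n))"
        using le by (rule ennreal_leI)
      also have "\<dots> = ennreal (R powr (-p)) * ?g1 (x - y)" unfolding g1 by (simp add: ennreal_mult')
      also have "\<dots> \<le> ennreal (R powr (-p)) * ?g1 (x - y) + ?g2 (x - y)" by (rule add_increasing2) auto
      finally show ?thesis .
    qed
  next
    case False
    have le2: "\<bar>cutoff R x - cutoff R y\<bar> powr p * ?d powr (-(?n + t)) \<le> 1 * ?d powr (-(?n + t))"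
      using le1 t by (intro mult_right_mono) (auto intro: powr_le1)
    have g2: "?g2 (x - y) = ennreal (?d powr (-(?n + t)))" using False by (simp add: indicator_def)
    have "ennreal (\<bar>cutoff R x - cutoff R y\<bar> powr p * ?d powr (-(?n + t))) \<le> ?g2 (x - y)"
      unfolding g2 using le2 by (intro ennreal_leI) simp
    also have "\<dots> \<le> ennreal (R powr (-p)) * ?g1 (x - y) + ?g2 (x - y)" by (rule add_increasing) auto
    finally show ?thesis .
  qed
qed

lemma cutoff_kernel_integral:
  fixes p t R :: real and y :: "'a::euclidean_space"
  assumes t: "0 < t" "t < p" and R: "0 < R"
  shows "(\<integral>\<^sup>+x. ennreal (\<bar>cutoff R x - cutoff R y\<bar> powr p * norm (x - y) powr (-(real DIM('a) + t))) \<partial>lborel)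
         \<le> ennreal ((dyadic_const DIM('a) (p - t) + dyadic_const DIM('a) t) * R powr (-t))"
proof -
  let ?n = "real DIM('a)"
  let ?g1 = "\<lambda>z::'a. indicator {z::'a. norm z < R} z * ennreal (norm z powr ((p - t) - ?n))"
  let ?g2 = "\<lambda>z::'a. indicator {z::'a. R \<le> norm z} z * ennreal (norm z powr (-(?n + t)))"
  have "(\<integral>\<^sup>+x. ennreal (\<bar>cutoff R x - cutoff R y\<bar> powr p * norm (x - y) powr (-(?n + t))) \<partial>lborel)
        \<le> (\<integral>\<^sup>+x. ennreal (R powr (-p)) * ?g1 (x - y) + ?g2 (x - y) \<partial>lborel)"
    by (intro nn_integral_mono cutoff_difference_bound t R)
  also have "\<dots> = ennreal (R powr (-p)) * (\<integral>\<^sup>+x. ?g1 (x - y) \<partial>lborel) + (\<integral>\<^sup>+x. ?g2 (x - y) \<partial>lborel)"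
  proof -
    have "(\<integral>\<^sup>+x. ennreal (R powr (-p)) * ?g1 (x - y) + ?g2 (x - y) \<partial>lborel)
        = (\<integral>\<^sup>+x. ennreal (R powr (-p)) * ?g1 (x - y) \<partial>lborel) + (\<integral>\<^sup>+x. ?g2 (x - y) \<partial>lborel)"
      by (rule nn_integral_add) measurable
    also have "(\<integral>\<^sup>+x. ennreal (R powr (-p)) * ?g1 (x - y) \<partial>lborel) = ennreal (R powr (-p)) * (\<integral>\<^sup>+x. ?g1 (x - y) \<partial>lborel)"
      by (rule nn_integral_cmult) measurable
    finally show ?thesis .
  qed
  also have "\<dots> = ennreal (R powr (-p)) * integral\<^sup>N lborel ?g1 + integral\<^sup>N lborel ?g2"
  proof -
    have "(\<integral>\<^sup>+x. ?g1 (x - y) \<partial>lborel) = integral\<^sup>N lborel ?g1" by (rule nn_integral_translate) measurable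
    moreover have "(\<integral>\<^sup>+x. ?g2 (x - y) \<partial>lborel) = integral\<^sup>N lborel ?g2" by (rule nn_integral_translate) measurable
    ultimately show ?thesis by simp
  qed
  also have "\<dots> \<le> ennreal (R powr (-p)) * ennreal (dyadic_const DIM('a) (p - t) * R powr (p - t))
                 + ennreal (dyadic_const DIM('a) t * R powr (-t))"
    using t R by (intro add_mono mult_left_mono inner_integral tail_integral) auto
  also have "\<dots> = ennreal ((dyadic_const DIM('a) (p - t) + dyadic_const DIM('a) t) * R powr (-t))"
  proof -
    have e: "-t = -p + (p - t)" by simp
    have "R powr (-p) * (dyadic_const DIM('a) (p - t) * R powr (p - t)) = dyadic_const DIM('a) (p - t) * R powr (-t)"
      unfolding e powr_add by (simp add: mult_ac)
    moreover have "0 \<le> dyadic_const DIM('a) (p - t) * R powr (p - t)" "0 \<le> dyadic_const DIM('a) t * R powr (-t)"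
      "0 \<le> dyadic_const DIM('a) (p - t) * R powr (-t)"
      using t dyadic_const_nonneg[of "p - t" "DIM('a)"] dyadic_const_nonneg[of t "DIM('a)"] by auto
    ultimately show ?thesis
      by (simp add: ennreal_mult'[symmetric] ennreal_plus[symmetric] distrib_right del: ennreal_plus)
  qed
  finally show ?thesis .
qed

section \<open>Admissible kernels and the localisation estimate\<close>

lemma admissible_kernel_bounds:
  assumes "admissible_kernel s p \<alpha> K" "z \<noteq> 0"
  shows "0 < K (z::'a::euclidean_space)"
    and "norm z powr (-(real DIM('a) + s * p)) / \<alpha> \<le> K z"
    and "K z \<le> \<alpha> * norm z powr (-(real DIM('a) + s * p))"
  using assms unfolding admissible_kernel_def by auto

lemma energy_ae_eq:
  assumes N: "N \<in> null_sets lborel" and eq: "\<And>x. x \<notin> N \<Longrightarrow> w x = w' x"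
  shows "energyK K p w A = energyK K p w' A"
  unfolding energyK_def
  by (rule nn_integral_cong_AE) (use AE_pair_notin[OF N] in \<open>eventually_elim, auto simp: eq\<close>)

lemma energy_mono_set: "energyK K p w A \<le> energyK K p w UNIV"
  unfolding energyK_def by (intro nn_integral_mono) (auto simp: indicator_def)

text \<open>If v vanishes outside B_r and |x| \<ge> R > r, the kernel term at (x, y) only sees v(y),
  and only for y \<in> B_r.  The kernel may be evaluated at x - y or y - x (the argument d).\<close>

lemma kernel_term_outside:
  fixes K v :: "'a::euclidean_space \<Rightarrow> real"
  assumes adm: "admissible_kernel s p \<alpha> K" and v0: "\<And>x. r \<le> norm x \<Longrightarrow> v x = 0"
    and rR: "r < R" and x: "R \<le> norm x" and d: "norm d = norm (x - y)"
  shows "ennreal (K d * \<bar>v x - v y\<bar> powr p)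
     \<le> ennreal \<alpha> * (indicator {y. norm y < r} y * ennreal (\<bar>v y\<bar> powr p * norm (x - y) powr (-(real DIM('a) + s * p))))"
proof (cases "norm y < r")
  case True
  have vx: "v x = 0" using v0 x rR by simp
  have d0: "d \<noteq> 0" using d x True rR by auto
  have Kd: "K d \<le> \<alpha> * norm (x - y) powr (-(real DIM('a) + s * p))"
    using admissible_kernel_bounds(3)[OF adm d0] d by simp
  have al: "0 < \<alpha>"
  proof -
    have "0 < \<alpha> * norm d powr (-(real DIM('a) + s * p))"
      using admissible_kernel_bounds(1,3)[OF adm d0] by linarith
    then show ?thesis by (simp add: zero_less_mult_iff)
  qed
  have "K d * \<bar>v x - v y\<bar> powr p = K d * \<bar>v y\<bar> powr p" using vx by simp
  also have "\<dots> \<le> \<alpha> * norm (x - y) powr (-(real DIM('a) + s * p)) * \<bar>v y\<bar> powr p"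
    by (rule mult_right_mono[OF Kd]) simp
  also have "\<dots> = \<alpha> * (\<bar>v y\<bar> powr p * norm (x - y) powr (-(real DIM('a) + s * p)))"
    by (simp only: mult_ac)
  finally have "ennreal (K d * \<bar>v x - v y\<bar> powr p)
      \<le> ennreal (\<alpha> * (\<bar>v y\<bar> powr p * norm (x - y) powr (-(real DIM('a) + s * p))))"
    by (rule ennreal_leI)
  also have "\<dots> = ennreal \<alpha> * ennreal (\<bar>v y\<bar> powr p * norm (x - y) powr (-(real DIM('a) + s * p)))"
    using al by (intro ennreal_mult) auto
  finally show ?thesis using True by simp
next
  case False
  then show ?thesis using v0[of x] v0[of y] x rR by simp
qed

lemma cross_term_integral:
  fixes v :: "'a::euclidean_space \<Rightarrow> real"
  assumes t: "0 < t" and r: "0 < r" "r < R" and vm[measurable]: "v \<in> borel_measurable borel"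
  shows "(\<integral>\<^sup>+z. indicator {y. norm y < r} (snd z) * indicator {x. R \<le> norm x} (fst z)
            * ennreal (\<bar>v (snd z)\<bar> powr p * norm (fst z - snd z) powr (-(real DIM('a) + t))) \<partial>lebesgue)
     \<le> ennreal (dyadic_const DIM('a) t * (R - r) powr (-t)) * (\<integral>\<^sup>+y. ennreal (\<bar>v y\<bar> powr p) \<partial>lborel)"
    (is "integral\<^sup>N lebesgue ?G \<le> ennreal ?C * _")
proof -
  have C: "0 \<le> ?C" using dyadic_const_nonneg[OF t] by simp
  have "integral\<^sup>N lebesgue ?G = (\<integral>\<^sup>+y. \<integral>\<^sup>+x. ?G (x, y) \<partial>lborel \<partial>lborel)"
    by (rule tonelli_snd) (simp add: borel_prod[symmetric])
  also have "\<dots> \<le> (\<integral>\<^sup>+y. ennreal ?C * ennreal (\<bar>v y\<bar> powr p) \<partial>lborel)"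
  proof (intro nn_integral_mono)
    fix y :: 'a
    show "(\<integral>\<^sup>+x. ?G (x, y) \<partial>lborel) \<le> ennreal ?C * ennreal (\<bar>v y\<bar> powr p)"
    proof (cases "norm y < r")
      case True
      have "(\<integral>\<^sup>+x. ?G (x, y) \<partial>lborel) = ennreal (\<bar>v y\<bar> powr p)
          * (\<integral>\<^sup>+x. indicator {x::'a. R \<le> norm x} x * ennreal (norm (x - y) powr (-(real DIM('a) + t))) \<partial>lborel)"
        using True by (subst nn_integral_cmult[symmetric]) (auto simp: ennreal_mult' mult_ac intro!: nn_integral_cong)
      also have "\<dots> \<le> ennreal (\<bar>v y\<bar> powr p) * ennreal ?C"
        using shifted_tail[OF t r True] by (intro mult_left_mono) auto
      finally show ?thesis by (simp add: mult.commute)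
    qed simp
  qed
  also have "\<dots> = ennreal ?C * (\<integral>\<^sup>+y. ennreal (\<bar>v y\<bar> powr p) \<partial>lborel)"
    by (rule nn_integral_cmult) measurable
  finally show ?thesis .
qed

lemma energy_le_local_plus_tail:
  fixes K v :: "'a::euclidean_space \<Rightarrow> real"
  assumes adm: "admissible_kernel s p \<alpha> K" and al: "0 < \<alpha>" and t: "0 < s * p"
    and r: "0 < r" "r < R"
    and vm[measurable]: "v \<in> borel_measurable borel" and v0: "\<And>x. r \<le> norm x \<Longrightarrow> v x = 0"
  shows "energyK K p v UNIV \<le> energyK K p v (ball 0 R)
          + ennreal (2 * \<alpha> * dyadic_const DIM('a) (s * p) * (R - r) powr (-(s * p))) * (\<integral>\<^sup>+y. ennreal (\<bar>v y\<bar> powr p) \<partial>lborel)"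
proof -
  let ?n = "real DIM('a)" and ?t = "s * p"
  define F where "F z = ennreal (K (fst z - snd z) * \<bar>v (fst z) - v (snd z)\<bar> powr p)" for z :: "'a \<times> 'a"
  define G where "G z = indicator {y::'a. norm y < r} (snd z) * indicator {x::'a. R \<le> norm x} (fst z)
      * ennreal (\<bar>v (snd z)\<bar> powr p * norm (fst z - snd z) powr (-(?n + ?t)))" for z :: "'a \<times> 'a"
  define C where "C = dyadic_const DIM('a) ?t * (R - r) powr (-?t)"
  define M where "M = (\<integral>\<^sup>+y. ennreal (\<bar>v y\<bar> powr p) \<partial>lborel)"
  have Cnn: "0 \<le> C" unfolding C_def using dyadic_const_nonneg[OF t] by simp
  have Gm[measurable]: "G \<in> borel_measurable borel" unfolding G_def borel_prod[symmetric] by measurable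
  have Gsm[measurable]: "(\<lambda>z. G (prod.swap z)) \<in> borel_measurable borel"
    using swap_borel_measurable Gm by (rule measurable_compose)
  have pt: "F z \<le> indicator (ball 0 R \<times> ball 0 R) z * F z + ennreal \<alpha> * (G z + G (prod.swap z))" for z
  proof (cases z)
    case (Pair x y)
    consider "z \<in> ball 0 R \<times> ball 0 R" | "R \<le> norm x" | "R \<le> norm y"
      using Pair by (force simp: mem_Times_iff)
    then show ?thesis
    proof cases
      case 1 then show ?thesis by simp
    next
      case 2
      have "F z \<le> ennreal \<alpha> * G z"
        using kernel_term_outside[OF adm v0 r(2) 2, where d = "x - y" and y = y] 2 Pair by (simp add: F_def G_def)
      also have "\<dots> \<le> ennreal \<alpha> * (G z + G (prod.swap z))" by (intro mult_left_mono add_increasing2) auto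
      finally show ?thesis by (rule order_trans) (rule add_increasing; simp)
    next
      case 3
      have "F z = ennreal (K (x - y) * \<bar>v y - v x\<bar> powr p)" by (simp add: F_def Pair abs_minus_commute)
      also have "\<dots> \<le> ennreal \<alpha> * G (prod.swap z)"
        using kernel_term_outside[OF adm v0 r(2) 3, where d = "x - y" and y = x] 3 Pair by (simp add: G_def norm_minus_commute)
      also have "\<dots> \<le> ennreal \<alpha> * (G z + G (prod.swap z))" by (intro mult_left_mono add_increasing) auto
      finally show ?thesis by (rule order_trans) (rule add_increasing; simp)
    qed
  qed
  have "energyK K p v UNIV = integral\<^sup>N lebesgue F"
    unfolding energyK_def F_def by simp
  also have "\<dots> \<le> (\<integral>\<^sup>+z. indicator (ball 0 R \<times> ball 0 R) z * F z + ennreal \<alpha> * (G z + G (prod.swap z)) \<partial>lebesgue)"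
    by (intro nn_integral_mono pt)
  also have "\<dots> \<le> energyK K p v (ball 0 R) + (\<integral>\<^sup>+z. ennreal \<alpha> * (G z + G (prod.swap z)) \<partial>lebesgue)"
    unfolding energyK_def F_def
    by (rule nn_integral_add_le, rule measurable_completion) (simp add: measurable_lborel1)
  also have "(\<integral>\<^sup>+z. ennreal \<alpha> * (G z + G (prod.swap z)) \<partial>lebesgue) = ennreal \<alpha> * (integral\<^sup>N lebesgue G + integral\<^sup>N lebesgue G)"
  proof -
    have GL: "G \<in> borel_measurable lebesgue" "(\<lambda>z. G (prod.swap z)) \<in> borel_measurable lebesgue"
      by (rule measurable_completion, simp add: measurable_lborel1)+
    have "(\<integral>\<^sup>+z. ennreal \<alpha> * (G z + G (prod.swap z)) \<partial>lebesgue) = ennreal \<alpha> * (\<integral>\<^sup>+z. G z + G (prod.swap z) \<partial>lebesgue)"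
      using GL by (intro nn_integral_cmult) auto
    also have "(\<integral>\<^sup>+z. G z + G (prod.swap z) \<partial>lebesgue) = integral\<^sup>N lebesgue G + integral\<^sup>N lebesgue G"
      using GL nn_integral_pair_swap[OF Gm] by (subst nn_integral_add) auto
    finally show ?thesis .
  qed
  also have "\<dots> \<le> ennreal \<alpha> * (ennreal C * M + ennreal C * M)"
    using cross_term_integral[OF t r vm, of p] unfolding G_def C_def M_def by (intro mult_left_mono add_mono) auto
  also have "ennreal \<alpha> * (ennreal C * M + ennreal C * M) = ennreal (2 * \<alpha> * C) * M"
  proof -
    have "ennreal (2 * \<alpha> * C) = ennreal \<alpha> * (ennreal C + ennreal C)"
      using al Cnn by (simp add: ennreal_mult[symmetric] ennreal_plus[symmetric] del: ennreal_plus)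
    then show ?thesis by (simp add: distrib_right mult.assoc)
  qed
  finally show ?thesis unfolding C_def M_def by (simp add: mult_ac)
qed

lemma annulus_measure:
  assumes r: "0 < r"
  shows "emeasure lborel {x::'a::euclidean_space. r \<le> norm x \<and> norm x < 2 * r}
       = ennreal (unit_ball_vol (real DIM('a)) * ((2 * r) ^ DIM('a) - r ^ DIM('a)))"
proof -
  have e: "{x::'a. r \<le> norm x \<and> norm x < 2 * r} = ball 0 (2 * r) - ball 0 r" by auto
  have "emeasure lborel (ball (0::'a) (2 * r) - ball 0 r) = emeasure lborel (ball (0::'a) (2 * r)) - emeasure lborel (ball (0::'a) r)"
    using r emeasure_lborel_ball_finite[of "0::'a" r] by (intro emeasure_Diff) auto
  also have "\<dots> = ennreal (unit_ball_vol (real DIM('a)) * (2 * r) ^ DIM('a)) - ennreal (unit_ball_vol (real DIM('a)) * r ^ DIM('a))"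
    using r by (simp add: emeasure_ball)
  also have "\<dots> = ennreal (unit_ball_vol (real DIM('a)) * ((2 * r) ^ DIM('a) - r ^ DIM('a)))"
    using r by (subst ennreal_minus) (auto simp: unit_ball_vol_nonneg right_diff_distrib)
  finally show ?thesis unfolding e .
qed

text \<open>Lower localisation: pairs (x, y) \<in> (B_(2r) - B_r) \<times> B_r lie in B_R \<times> B_R, have
  |x - y| \<le> 3r and v(x) = 0; they alone give a multiple of r^(-sp) \<parallel>v\<parallel>_p^p.\<close>

lemma energy_annulus_lower_bound:
  fixes K v :: "'a::euclidean_space \<Rightarrow> real"
  assumes adm: "admissible_kernel s p \<alpha> K" and al: "0 < \<alpha>" and t: "0 < s * p" and p: "0 < p"
    and r: "0 < r" "2 * r \<le> R"
    and vm[measurable]: "v \<in> borel_measurable borel" and v0: "\<And>x. r \<le> norm x \<Longrightarrow> v x = 0"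
  shows "ennreal ((3 * r) powr (-(real DIM('a) + s * p)) / \<alpha> * (unit_ball_vol (real DIM('a)) * ((2 * r) ^ DIM('a) - r ^ DIM('a))))
           * (\<integral>\<^sup>+y. ennreal (\<bar>v y\<bar> powr p) \<partial>lborel) \<le> energyK K p v (ball 0 R)"
proof -
  let ?n = "real DIM('a)" and ?t = "s * p"
  define c where "c = (3 * r) powr (-(?n + ?t)) / \<alpha>"
  define ann where "ann = unit_ball_vol ?n * ((2 * r) ^ DIM('a) - r ^ DIM('a))"
  define Ann where "Ann = {x::'a. r \<le> norm x \<and> norm x < 2 * r}"
  have cnn: "0 \<le> c" using al by (simp add: c_def)
  have annnn: "0 \<le> ann" unfolding ann_def using r
    by (intro mult_nonneg_nonneg unit_ball_vol_nonneg) (auto intro!: power_mono)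
  define F where "F z = ennreal (K (fst z - snd z) * \<bar>v (fst z) - v (snd z)\<bar> powr p)" for z :: "'a \<times> 'a"
  define H where "H z = indicator {y::'a. norm y < r} (snd z) * indicator Ann (fst z) * ennreal (c * \<bar>v (snd z)\<bar> powr p)" for z :: "'a \<times> 'a"
  have am: "emeasure lborel Ann = ennreal ann" unfolding Ann_def ann_def by (rule annulus_measure[OF r(1)])
  have Hm[measurable]: "H \<in> borel_measurable borel" unfolding H_def Ann_def borel_prod[symmetric] by measurable
  have ER: "energyK K p v (ball 0 R) = (\<integral>\<^sup>+z. indicator (ball 0 R \<times> ball 0 R) z * F z \<partial>lebesgue)"
    unfolding energyK_def F_def by simp
  have pt: "H z \<le> indicator (ball 0 R \<times> ball 0 R) z * F z" for z
  proof (cases z)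
    case (Pair x y)
    show ?thesis
    proof (cases "norm y < r \<and> x \<in> Ann")
      case True
      then have x: "r \<le> norm x" "norm x < 2 * r" and y: "norm y < r" by (auto simp: Ann_def)
      have xy0: "x - y \<noteq> 0" using x y by auto
      have dle: "norm (x - y) \<le> 3 * r" using norm_triangle_ineq4[of x y] x y by auto
      have "c \<le> norm (x - y) powr (-(?n + ?t)) / \<alpha>"
        unfolding c_def using al dle xy0 t by (intro divide_right_mono powr_mono2') auto
      also have "\<dots> \<le> K (x - y)" by (rule admissible_kernel_bounds(2)[OF adm xy0])
      finally have cK: "c \<le> K (x - y)" .
      have vx: "v x = 0" using v0 x by auto
      have "c * \<bar>v y\<bar> powr p \<le> K (x - y) * \<bar>v x - v y\<bar> powr p"
        using cK vx by (simp add: mult_right_mono)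
      moreover have "z \<in> ball 0 R \<times> ball 0 R" using Pair x y r by auto
      ultimately show ?thesis using Pair True by (simp add: H_def F_def ennreal_leI)
    next
      case False
      then show ?thesis using Pair by (auto simp: H_def)
    qed
  qed
  have "(\<integral>\<^sup>+z. H z \<partial>lebesgue) = (\<integral>\<^sup>+y. \<integral>\<^sup>+x. H (x, y) \<partial>lborel \<partial>lborel)"
    by (rule tonelli_snd) measurable
  also have "\<dots> = (\<integral>\<^sup>+y. ennreal (c * ann) * ennreal (\<bar>v y\<bar> powr p) \<partial>lborel)"
  proof (intro nn_integral_cong)
    fix y :: 'a
    have "(\<integral>\<^sup>+x. H (x, y) \<partial>lborel) = (\<integral>\<^sup>+x. (indicator {y::'a. norm y < r} y * ennreal (c * \<bar>v y\<bar> powr p)) * indicator Ann x \<partial>lborel)"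
      by (intro nn_integral_cong) (simp add: H_def mult_ac)
    also have "\<dots> = (indicator {y::'a. norm y < r} y * ennreal (c * \<bar>v y\<bar> powr p)) * emeasure lborel Ann"
      by (subst nn_integral_cmult) (auto simp: Ann_def)
    also have "\<dots> = ennreal (c * ann) * ennreal (\<bar>v y\<bar> powr p)"
    proof (cases "norm y < r")
      case True
      then show ?thesis using cnn annnn
        by (simp add: am ennreal_mult'[symmetric] mult_ac)
    next
      case False
      then show ?thesis using v0[of y] p by simp
    qed
    finally show "(\<integral>\<^sup>+x. H (x, y) \<partial>lborel) = ennreal (c * ann) * ennreal (\<bar>v y\<bar> powr p)" .
  qed
  also have "\<dots> = ennreal (c * ann) * (\<integral>\<^sup>+y. ennreal (\<bar>v y\<bar> powr p) \<partial>lborel)"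
    by (rule nn_integral_cmult) measurable
  finally have eq: "(\<integral>\<^sup>+z. H z \<partial>lebesgue) = ennreal (c * ann) * (\<integral>\<^sup>+y. ennreal (\<bar>v y\<bar> powr p) \<partial>lborel)" .
  have "(\<integral>\<^sup>+z. H z \<partial>lebesgue) \<le> energyK K p v (ball 0 R)"
    unfolding ER by (intro nn_integral_mono pt)
  then show ?thesis unfolding eq c_def ann_def .
qed

definition annulus_const :: "nat \<Rightarrow> real \<Rightarrow> real \<Rightarrow> real" where
  "annulus_const n t \<alpha> = 3 powr (-(real n + t)) / \<alpha> * (unit_ball_vol (real n) * (2 ^ n - 1))"

definition localisation_const :: "nat \<Rightarrow> real \<Rightarrow> real \<Rightarrow> real" where
  "localisation_const n t \<alpha> = 2 * \<alpha> * dyadic_const n t / annulus_const n t \<alpha>"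

lemma annulus_const_pos:
  assumes "0 < \<alpha>" "0 < n"
  shows "0 < annulus_const n t \<alpha>"
proof -
  have "(1::real) < 2 ^ n" using assms(2) by (intro one_less_power) auto
  then show ?thesis unfolding annulus_const_def using assms(1) by (intro mult_pos_pos divide_pos_pos) auto
qed

lemma localisation_const_nonneg:
  assumes "0 < \<alpha>" "0 < t"
  shows "0 \<le> localisation_const n t \<alpha>"
  unfolding localisation_const_def annulus_const_def
  using assms dyadic_const_nonneg[OF assms(2), of n] by (auto intro!: divide_nonneg_nonneg)

lemma energy_ball_lower_bound:
  fixes K v :: "'a::euclidean_space \<Rightarrow> real"
  assumes adm: "admissible_kernel s p \<alpha> K" and al: "0 < \<alpha>" and t: "0 < s * p" and p: "0 < p"
    and r: "0 < r" "2 * r \<le> R"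
    and vm: "v \<in> borel_measurable borel" and v0: "\<And>x. r \<le> norm x \<Longrightarrow> v x = 0"
  shows "ennreal (annulus_const DIM('a) (s * p) \<alpha> * r powr (-(s * p))) * (\<integral>\<^sup>+y. ennreal (\<bar>v y\<bar> powr p) \<partial>lborel)
     \<le> energyK K p v (ball 0 R)"
proof -
  let ?n = "real DIM('a)" and ?t = "s * p"
  have a: "(3 * r) powr (-(?n + ?t)) = 3 powr (-(?n + ?t)) * r powr (-(?n + ?t))"
    using r by (simp add: powr_mult)
  have b: "(2 * r) ^ DIM('a) - r ^ DIM('a) = (2 ^ DIM('a) - 1) * r powr ?n"
    using r by (simp add: power_mult_distrib powr_realpow algebra_simps)
  have c: "r powr (-(?n + ?t)) * r powr ?n = r powr (-?t)"
    by (simp add: powr_add[symmetric])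
  have "(3 * r) powr (-(?n + ?t)) / \<alpha> * (unit_ball_vol ?n * ((2 * r) ^ DIM('a) - r ^ DIM('a)))
      = annulus_const DIM('a) ?t \<alpha> * r powr (-?t)"
    unfolding annulus_const_def a b using c by (simp add: mult_ac)
  then show ?thesis using energy_annulus_lower_bound[OF adm al t p r vm v0] by simp
qed

lemma energy_localisation:
  fixes K v :: "'a::euclidean_space \<Rightarrow> real"
  assumes adm: "admissible_kernel s p \<alpha> K" and al: "0 < \<alpha>" and t: "0 < s * p" and p: "0 < p"
    and r: "0 < r" "2 * r \<le> R"
    and vm: "v \<in> borel_measurable borel" and v0: "\<And>x. r \<le> norm x \<Longrightarrow> v x = 0"
  shows "energyK K p v UNIV
     \<le> ennreal (1 + localisation_const DIM('a) (s * p) \<alpha> * (r powr (s * p) / (R - r) powr (s * p))) * energyK K p v (ball 0 R)"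
proof -
  let ?t = "s * p"
  define M where "M = (\<integral>\<^sup>+y. ennreal (\<bar>v y\<bar> powr p) \<partial>lborel)"
  define A where "A = annulus_const DIM('a) ?t \<alpha>"
  define C where "C = localisation_const DIM('a) ?t \<alpha>"
  define \<theta> where "\<theta> = r powr ?t / (R - r) powr ?t"
  have Apos: "0 < A" unfolding A_def using al by (intro annulus_const_pos) auto
  have Cnn: "0 \<le> C" unfolding C_def using al t by (rule localisation_const_nonneg)
  have thnn: "0 \<le> \<theta>" by (simp add: \<theta>_def)
  have tail: "2 * \<alpha> * dyadic_const DIM('a) ?t * (R - r) powr (-?t) = (C * \<theta>) * (A * r powr (-?t))"
  proof -
    have "r powr ?t * r powr (-?t) = 1" using r by (simp add: powr_add[symmetric])
    moreover have "(R - r) powr (-?t) = 1 / (R - r) powr ?t" by (simp add: powr_minus_divide)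
    ultimately show ?thesis unfolding C_def localisation_const_def \<theta>_def A_def[symmetric] using Apos
      by (simp add: field_simps)
  qed
  have rR: "r < R" using r by simp
  have "ennreal (2 * \<alpha> * dyadic_const DIM('a) ?t * (R - r) powr (-?t)) * M
      = ennreal (C * \<theta>) * (ennreal (A * r powr (-?t)) * M)"
    unfolding tail using Cnn thnn Apos by (simp add: ennreal_mult mult.assoc)
  then have "energyK K p v UNIV \<le> energyK K p v (ball 0 R) + ennreal (C * \<theta>) * (ennreal (A * r powr (-?t)) * M)"
    using energy_le_local_plus_tail[OF adm al t r(1) rR vm v0] unfolding M_def by simp
  also have "\<dots> \<le> energyK K p v (ball 0 R) + ennreal (C * \<theta>) * energyK K p v (ball 0 R)"
    using energy_ball_lower_bound[OF adm al t p r vm v0]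
    unfolding A_def M_def by (intro add_left_mono mult_left_mono) auto
  also have "\<dots> = ennreal (1 + C * \<theta>) * energyK K p v (ball 0 R)"
    using Cnn thnn by (simp add: ennreal_plus distrib_right)
  finally show ?thesis unfolding C_def \<theta>_def .
qed

section \<open>Multiplying by the cutoff\<close>

lemma cut_integrand_bound:
  fixes \<kappa> \<kappa>0 \<beta> \<phi>x \<phi>y a b l p :: real
  assumes \<kappa>: "0 \<le> \<kappa>" "\<kappa> \<le> \<beta> * \<kappa>0" and \<phi>: "\<bar>\<phi>x\<bar> \<le> 1" and l: "0 < l" "l < 1" and p: "1 \<le> p"
  shows "\<kappa> * \<bar>\<phi>x * a - \<phi>y * b\<bar> powr p
     \<le> l powr (1 - p) * (\<kappa> * \<bar>a - b\<bar> powr p) + (1 - l) powr (1 - p) * \<beta> * \<bar>b\<bar> powr p * (\<bar>\<phi>x - \<phi>y\<bar> powr p * \<kappa>0)"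
proof -
  let ?X = "(1 - l) powr (1 - p) * (\<bar>b\<bar> powr p * \<bar>\<phi>x - \<phi>y\<bar> powr p)"
  have "\<kappa> * \<bar>\<phi>x * a - \<phi>y * b\<bar> powr p \<le> \<kappa> * (l powr (1 - p) * \<bar>a - b\<bar> powr p + ?X)"
    using product_difference_bound[OF \<phi> l p] \<kappa>(1) by (rule mult_left_mono)
  also have "\<dots> = l powr (1 - p) * (\<kappa> * \<bar>a - b\<bar> powr p) + ?X * \<kappa>"
    by (simp add: algebra_simps)
  also have "\<dots> \<le> l powr (1 - p) * (\<kappa> * \<bar>a - b\<bar> powr p) + ?X * (\<beta> * \<kappa>0)"
    using \<kappa>(2) by (intro add_left_mono mult_left_mono) auto
  also have "\<dots> = l powr (1 - p) * (\<kappa> * \<bar>a - b\<bar> powr p) + (1 - l) powr (1 - p) * \<beta> * \<bar>b\<bar> powr p * (\<bar>\<phi>x - \<phi>y\<bar> powr p * \<kappa>0)"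
    by (simp add: mult_ac)
  finally show ?thesis .
qed

lemma cutoff_remainder_integral:
  fixes v :: "'a::euclidean_space \<Rightarrow> real"
  assumes vm[measurable]: "v \<in> borel_measurable borel" and t: "0 < t" "t < p" and R: "0 < R"
  shows "(\<integral>\<^sup>+z. ennreal (\<bar>v (snd z)\<bar> powr p * (\<bar>cutoff R (fst z) - cutoff R (snd z)\<bar> powr p
            * norm (fst z - snd z) powr (-(real DIM('a) + t)))) \<partial>lebesgue)
     \<le> ennreal ((dyadic_const DIM('a) (p - t) + dyadic_const DIM('a) t) * R powr (-t)) * (\<integral>\<^sup>+y. ennreal (\<bar>v y\<bar> powr p) \<partial>lborel)"
    (is "integral\<^sup>N lebesgue ?G \<le> ennreal ?C * _")
proof -
  have C: "0 \<le> ?C" using t dyadic_const_nonneg[of "p - t" "DIM('a)"] dyadic_const_nonneg[of t "DIM('a)"] by simp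
  have "integral\<^sup>N lebesgue ?G = (\<integral>\<^sup>+y. \<integral>\<^sup>+x. ?G (x, y) \<partial>lborel \<partial>lborel)"
    by (rule tonelli_snd) (simp add: borel_prod[symmetric])
  also have "\<dots> \<le> (\<integral>\<^sup>+y. ennreal ?C * ennreal (\<bar>v y\<bar> powr p) \<partial>lborel)"
  proof (intro nn_integral_mono)
    fix y :: 'a
    have "(\<integral>\<^sup>+x. ?G (x, y) \<partial>lborel) = ennreal (\<bar>v y\<bar> powr p)
        * (\<integral>\<^sup>+x. ennreal (\<bar>cutoff R x - cutoff R y\<bar> powr p * norm (x - y) powr (-(real DIM('a) + t))) \<partial>lborel)"
      by (subst nn_integral_cmult[symmetric]) (auto simp: ennreal_mult intro!: nn_integral_cong)
    also have "\<dots> \<le> ennreal (\<bar>v y\<bar> powr p) * ennreal ?C"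
      by (intro mult_left_mono cutoff_kernel_integral t R) auto
    finally show "(\<integral>\<^sup>+x. ?G (x, y) \<partial>lborel) \<le> ennreal ?C * ennreal (\<bar>v y\<bar> powr p)"
      by (simp add: mult.commute)
  qed
  also have "\<dots> = ennreal ?C * (\<integral>\<^sup>+y. ennreal (\<bar>v y\<bar> powr p) \<partial>lborel)"
    by (rule nn_integral_cmult) measurable
  finally show ?thesis .
qed

text \<open>The Borel version w' of w is needed to integrate the remainder term.\<close>

lemma cut_energy:
  fixes k w w' :: "'a::euclidean_space \<Rightarrow> real"
  assumes N: "N \<in> null_sets lborel" and ww: "\<And>x. x \<notin> N \<Longrightarrow> w x = w' x"
    and wm[measurable]: "w' \<in> borel_measurable borel"
    and kpos: "\<And>z. z \<noteq> 0 \<Longrightarrow> 0 \<le> k z"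
    and kle: "\<And>z. z \<noteq> 0 \<Longrightarrow> k z \<le> \<beta> * norm z powr (-(real DIM('a) + t))"
    and \<beta>: "0 \<le> \<beta>" and l: "0 < l" "l < 1" and p: "1 \<le> p" and t: "0 < t" "t < p" and R: "0 < R"
  shows "(\<integral>\<^sup>+z. ennreal (k (fst z - snd z) * \<bar>cutoff R (fst z) * w (fst z) - cutoff R (snd z) * w (snd z)\<bar> powr p) \<partial>lebesgue)
     \<le> ennreal (l powr (1 - p)) * (\<integral>\<^sup>+z. ennreal (k (fst z - snd z) * \<bar>w (fst z) - w (snd z)\<bar> powr p) \<partial>lebesgue)
       + ennreal ((1 - l) powr (1 - p) * \<beta> * (dyadic_const DIM('a) (p - t) + dyadic_const DIM('a) t) * R powr (-t))
         * (\<integral>\<^sup>+y. ennreal (\<bar>w y\<bar> powr p) \<partial>lborel)"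
proof -
  let ?k = "\<lambda>z::'a. norm z powr (-(real DIM('a) + t))"
  let ?\<phi> = "cutoff R"
  define a where "a = (1 - l) powr (1 - p) * \<beta>"
  define Cp where "Cp = (dyadic_const DIM('a) (p - t) + dyadic_const DIM('a) t) * R powr (-t)"
  have ann: "0 \<le> a" using \<beta> by (simp add: a_def)
  have Cpnn: "0 \<le> Cp" unfolding Cp_def using t dyadic_const_nonneg[of "p - t" "DIM('a)"] dyadic_const_nonneg[of t "DIM('a)"] by auto
  define Fv where "Fv z = ennreal (k (fst z - snd z) * \<bar>?\<phi> (fst z) * w (fst z) - ?\<phi> (snd z) * w (snd z)\<bar> powr p)" for z :: "'a \<times> 'a"
  define Fw where "Fw z = ennreal (k (fst z - snd z) * \<bar>w (fst z) - w (snd z)\<bar> powr p)" for z :: "'a \<times> 'a"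
  define G where "G z = ennreal (\<bar>w' (snd z)\<bar> powr p * (\<bar>?\<phi> (fst z) - ?\<phi> (snd z)\<bar> powr p * ?k (fst z - snd z)))" for z :: "'a \<times> 'a"
  have Gm[measurable]: "G \<in> borel_measurable borel" unfolding G_def borel_prod[symmetric] by measurable
  have ae: "AE z in lebesgue. Fv z \<le> ennreal (l powr (1 - p)) * Fw z + ennreal a * G z"
    using AE_pair_notin[OF N]
  proof eventually_elim
    case (elim z)
    obtain x y where z: "z = (x, y)" by (cases z)
    have wy: "w y = w' y" using elim z ww by auto
    show ?case
    proof (cases "x = y")
      case True then show ?thesis using z p by (simp add: Fv_def)
    next
      case False
      then have xy0: "x - y \<noteq> 0" by simp
      have kk: "0 \<le> k (x - y)" "k (x - y) \<le> \<beta> * ?k (x - y)" using kpos[OF xy0] kle[OF xy0] by auto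
      have le: "k (x - y) * \<bar>?\<phi> x * w x - ?\<phi> y * w y\<bar> powr p
          \<le> l powr (1 - p) * (k (x - y) * \<bar>w x - w y\<bar> powr p) + a * (\<bar>w' y\<bar> powr p * (\<bar>?\<phi> x - ?\<phi> y\<bar> powr p * ?k (x - y)))"
        using cut_integrand_bound[OF kk _ l p, of "?\<phi> x"] cutoff_bounds[of R x] unfolding a_def wy by (simp add: mult.assoc)
      have "Fv z = ennreal (k (x - y) * \<bar>?\<phi> x * w x - ?\<phi> y * w y\<bar> powr p)" unfolding Fv_def z by simp
      also have "\<dots> \<le> ennreal (l powr (1 - p) * (k (x - y) * \<bar>w x - w y\<bar> powr p) + a * (\<bar>w' y\<bar> powr p * (\<bar>?\<phi> x - ?\<phi> y\<bar> powr p * ?k (x - y))))"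
        by (rule ennreal_leI[OF le])
      also have "\<dots> = ennreal (l powr (1 - p)) * Fw z + ennreal a * G z"
        unfolding Fw_def G_def z using kk ann
        by (simp add: ennreal_plus ennreal_mult)
      finally show ?thesis .
    qed
  qed
  have Mw: "(\<integral>\<^sup>+y. ennreal (\<bar>w' y\<bar> powr p) \<partial>lborel) = (\<integral>\<^sup>+y. ennreal (\<bar>w y\<bar> powr p) \<partial>lborel)"
    by (rule nn_integral_cong_AE) (use AE_not_in[OF N] in \<open>eventually_elim, simp add: ww\<close>)
  have main: "(\<integral>\<^sup>+z. ennreal (l powr (1 - p)) * Fw z \<partial>lebesgue) \<le> ennreal (l powr (1 - p)) * integral\<^sup>N lebesgue Fw"
    by (rule nn_integral_cmult_le) simp
  have "(\<integral>\<^sup>+z. ennreal a * G z \<partial>lebesgue) = ennreal a * integral\<^sup>N lebesgue G"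
    by (rule nn_integral_cmult, rule measurable_completion) (simp add: measurable_lborel1)
  also have "\<dots> \<le> ennreal a * (ennreal Cp * (\<integral>\<^sup>+y. ennreal (\<bar>w y\<bar> powr p) \<partial>lborel))"
    using cutoff_remainder_integral[OF wm t R] unfolding Mw G_def Cp_def by (rule mult_left_mono) simp
  finally have remainder: "(\<integral>\<^sup>+z. ennreal a * G z \<partial>lebesgue)
      \<le> ennreal a * (ennreal Cp * (\<integral>\<^sup>+y. ennreal (\<bar>w y\<bar> powr p) \<partial>lborel))" .
  have "integral\<^sup>N lebesgue Fv \<le> (\<integral>\<^sup>+z. ennreal (l powr (1 - p)) * Fw z + ennreal a * G z \<partial>lebesgue)"
    by (rule nn_integral_mono_AE[OF ae])
  also have "\<dots> \<le> (\<integral>\<^sup>+z. ennreal (l powr (1 - p)) * Fw z \<partial>lebesgue) + (\<integral>\<^sup>+z. ennreal a * G z \<partial>lebesgue)"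
    by (rule nn_integral_add_le, rule measurable_completion) (simp add: measurable_lborel1)
  also have "\<dots> \<le> ennreal (l powr (1 - p)) * integral\<^sup>N lebesgue Fw
      + ennreal a * (ennreal Cp * (\<integral>\<^sup>+y. ennreal (\<bar>w y\<bar> powr p) \<partial>lborel))"
    by (rule add_mono[OF main remainder])
  finally have "integral\<^sup>N lebesgue Fv \<le> ennreal (l powr (1 - p)) * integral\<^sup>N lebesgue Fw
      + ennreal a * (ennreal Cp * (\<integral>\<^sup>+y. ennreal (\<bar>w y\<bar> powr p) \<partial>lborel))" .
  moreover have "ennreal a * (ennreal Cp * (\<integral>\<^sup>+y. ennreal (\<bar>w y\<bar> powr p) \<partial>lborel))
      = ennreal (a * Cp) * (\<integral>\<^sup>+y. ennreal (\<bar>w y\<bar> powr p) \<partial>lborel)"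
    using ann Cpnn by (simp add: ennreal_mult mult.assoc)
  moreover have "a * Cp = (1 - l) powr (1 - p) * \<beta> * (dyadic_const DIM('a) (p - t) + dyadic_const DIM('a) t) * R powr (-t)"
    unfolding a_def Cp_def by (simp add: mult_ac)
  ultimately show ?thesis unfolding Fv_def Fw_def by simp
qed

text \<open>The Gagliardo integrand is the energy integrand of the model kernel |z|^(-n-sp).\<close>

lemma seminorm_form:
  fixes d :: "'a::euclidean_space"
  shows "ennreal (a / norm d powr (real DIM('a) + t))
       = ennreal (norm d powr (-(real DIM('a) + t)) * a)"
proof -
  have "norm d powr (-(real DIM('a) + t)) = inverse (norm d powr (real DIM('a) + t))"
    by (rule powr_minus)
  then show ?thesis by (simp add: divide_inverse mult.commute)
qed

lemma cut_sobolev: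
  fixes w :: "'a::euclidean_space \<Rightarrow> real"
  assumes w: "w \<in> frac_sobolev s p" and p: "1 < p" and s: "s < 1" and t: "0 < s * p" and R: "0 < R"
  shows "(\<lambda>x. cutoff R x * w x) \<in> frac_sobolev s p"
proof -
  let ?n = "real DIM('a)" and ?t = "s * p"
  have wm[measurable]: "w \<in> borel_measurable lebesgue"
    and wL: "(\<integral>\<^sup>+ x. ennreal (\<bar>w x\<bar> powr p) \<partial>lebesgue) < \<infinity>"
    and wS: "(\<integral>\<^sup>+ z. ennreal (\<bar>w (fst z) - w (snd z)\<bar> powr p /
          norm (fst z - snd z) powr (?n + ?t)) \<partial>(lebesgue :: ('a \<times> 'a) measure)) < \<infinity>"
    using w unfolding frac_sobolev_def by auto
  obtain w' N where w'[measurable]: "w' \<in> borel_measurable borel" and N: "N \<in> null_sets lborel"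
    and ww: "\<And>x. x \<notin> N \<Longrightarrow> w x = w' x"
    using borel_version[OF wm] by blast
  have tp: "?t < p" using s p t by simp
  have L: "(\<integral>\<^sup>+ x. ennreal (\<bar>cutoff R x * w x\<bar> powr p) \<partial>lebesgue) < \<infinity>"
  proof -
    have "(\<integral>\<^sup>+ x. ennreal (\<bar>cutoff R x * w x\<bar> powr p) \<partial>lebesgue) \<le> (\<integral>\<^sup>+ x. ennreal (\<bar>w x\<bar> powr p) \<partial>lebesgue)"
    proof (intro nn_integral_mono ennreal_leI powr_mono2)
      fix x
      show "\<bar>cutoff R x * w x\<bar> \<le> \<bar>w x\<bar>"
        using cutoff_bounds[of R x] by (auto simp: abs_mult intro: mult_left_le_one_le)
    qed (use p in auto)
    then show ?thesis using wL by (simp add: order_le_less_trans)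
  qed
  have S: "(\<integral>\<^sup>+ z. ennreal (\<bar>cutoff R (fst z) * w (fst z) - cutoff R (snd z) * w (snd z)\<bar> powr p /
          norm (fst z - snd z) powr (?n + ?t)) \<partial>(lebesgue :: ('a \<times> 'a) measure)) < \<infinity>"
  proof -
    have "(\<integral>\<^sup>+ z. ennreal (\<bar>cutoff R (fst z) * w (fst z) - cutoff R (snd z) * w (snd z)\<bar> powr p /
          norm (fst z - snd z) powr (?n + ?t)) \<partial>(lebesgue :: ('a \<times> 'a) measure))
        = (\<integral>\<^sup>+ z. ennreal (norm (fst z - snd z) powr (-(?n + ?t)) * \<bar>cutoff R (fst z) * w (fst z) - cutoff R (snd z) * w (snd z)\<bar> powr p) \<partial>(lebesgue :: ('a \<times> 'a) measure))"
      by (simp only: seminorm_form)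
    also have "\<dots> \<le> ennreal ((1/2) powr (1 - p)) * (\<integral>\<^sup>+z. ennreal (norm (fst z - snd z) powr (-(?n + ?t)) * \<bar>w (fst z) - w (snd z)\<bar> powr p) \<partial>lebesgue)
       + ennreal ((1 - 1/2) powr (1 - p) * 1 * (dyadic_const DIM('a) (p - ?t) + dyadic_const DIM('a) ?t) * R powr (-?t))
         * (\<integral>\<^sup>+y. ennreal (\<bar>w y\<bar> powr p) \<partial>lborel)"
      by (rule cut_energy[OF N ww w']) (use p t tp R in auto)
    also have "\<dots> < \<infinity>"
    proof -
      have "(\<integral>\<^sup>+z. ennreal (norm (fst z - snd z) powr (-(?n + ?t)) * \<bar>w (fst z) - w (snd z)\<bar> powr p) \<partial>(lebesgue :: ('a \<times> 'a) measure)) < \<infinity>"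
        using wS by (simp only: seminorm_form)
      moreover have "(\<integral>\<^sup>+y. ennreal (\<bar>w y\<bar> powr p) \<partial>lborel) < \<infinity>"
        using wL by (simp add: nn_integral_completion)
      ultimately show ?thesis by (simp add: ennreal_mult_less_top)
    qed
    finally show ?thesis .
  qed
  show ?thesis unfolding frac_sobolev_def using L S by auto
qed

lemma cut_energyK:
  fixes w :: "'a::euclidean_space \<Rightarrow> real" and K :: "'a \<Rightarrow> real"
  assumes adm: "admissible_kernel s p \<alpha> K" and al: "0 \<le> \<alpha>"
    and wm: "w \<in> borel_measurable lebesgue"
    and l: "0 < l" "l < 1" and p: "1 < p" and s: "s < 1" and t: "0 < s * p" and R: "0 < R"
  shows "energyK K p (\<lambda>x. cutoff R x * w x) UNIV
     \<le> ennreal (l powr (1 - p)) * energyK K p w UNIV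
       + ennreal ((1 - l) powr (1 - p) * \<alpha> * (dyadic_const DIM('a) (p - s * p) + dyadic_const DIM('a) (s * p)) * R powr (-(s * p)))
         * (\<integral>\<^sup>+y. ennreal (\<bar>w y\<bar> powr p) \<partial>lborel)"
proof -
  obtain w' N where w'[measurable]: "w' \<in> borel_measurable borel" and N: "N \<in> null_sets lborel"
    and ww: "\<And>x. x \<notin> N \<Longrightarrow> w x = w' x"
    using borel_version[OF wm] by blast
  have tp: "s * p < p" using s p t by simp
  show ?thesis
    unfolding energyK_def
    using cut_energy[OF N ww w', of K \<alpha> "s * p" l p R] admissible_kernel_bounds(1,3)[OF adm] al l p t tp R
    by (simp add: less_imp_le)
qed

lemma cut_support:
  assumes "0 < R" "2 * R \<le> r"
  shows "AE x in lebesgue. x \<notin> ball 0 r \<longrightarrow> cutoff R x * w x = 0"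
  using assms by (intro AE_I2) (auto simp: cutoff_zero)

lemma cut_precise:
  fixes w :: "'a::euclidean_space \<Rightarrow> real"
  assumes R: "0 < R" and x: "norm x < R"
  shows "precise_rep (\<lambda>y. cutoff R y * w y) x = precise_rep w x"
proof -
  have ev: "eventually (\<lambda>\<rho>. ball_avg (\<lambda>y. cutoff R y * w y) x \<rho> = ball_avg w x \<rho>) (at_right 0)"
  proof -
    have "eventually (\<lambda>\<rho>. \<rho> \<in> {0<..<R - norm x}) (at_right (0::real))"
      using x by (intro eventually_at_right_real) simp
    then show ?thesis
    proof eventually_elim
      case (elim \<rho>)
      have "\<forall>y. y \<in> ball x \<rho> \<longrightarrow> cutoff R y * w y = w y"
      proof (intro allI impI)
        fix y assume "y \<in> ball x \<rho>"
        then have "norm y \<le> R" using elim norm_triangle_ineq2[of y x]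
          by (auto simp: dist_norm norm_minus_commute)
        then have "cutoff R y = 1" by (rule cutoff_one[OF R])
        then show "cutoff R y * w y = w y" by simp
      qed
      then have "(LINT y:ball x \<rho>|lebesgue. cutoff R y * w y) = (LINT y:ball x \<rho>|lebesgue. w y)"
        by (intro set_lebesgue_integral_cong) auto
      then show ?case unfolding ball_avg_def by simp
    qed
  qed
  have "(\<exists>l. (ball_avg (\<lambda>y. cutoff R y * w y) x \<longlongrightarrow> l) (at_right 0)) = (\<exists>l. (ball_avg w x \<longlongrightarrow> l) (at_right 0))"
    using tendsto_cong[OF ev] by auto
  moreover have "Lim (at_right 0) (ball_avg (\<lambda>y. cutoff R y * w y) x) = Lim (at_right 0) (ball_avg w x)"
    by (rule Lim_cong[OF ev]) simp
  ultimately show ?thesis unfolding precise_rep_def by simp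
qed

section \<open>The two parts of the theorem\<close>

lemma capK_le_CK: "capK K s p T \<le> CK K s p T r"
  unfolding capK_def CK_def by (rule Inf_superset_mono) blast

lemma capK_rel_le_CK: "capK_rel K s p T R r \<le> CK K s p T r"
  unfolding capK_rel_def CK_def
proof (rule Inf_greatest)
  fix x assume "x \<in> {energyK K p w UNIV | w. w \<in> frac_sobolev s p \<and>
       (AE x in lebesgue. x \<notin> ball 0 r \<longrightarrow> w x = 0) \<and> qe_on s p T (\<lambda>x. precise_rep w x \<ge> 1)}"
  then obtain w where w: "x = energyK K p w UNIV" "w \<in> frac_sobolev s p"
       "(AE x in lebesgue. x \<notin> ball 0 r \<longrightarrow> w x = 0)" "qe_on s p T (\<lambda>x. precise_rep w x \<ge> 1)" by blast
  have "Inf {energyK K p w (ball 0 R) | w. w \<in> frac_sobolev s p \<and>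
       (AE x in lebesgue. x \<notin> ball 0 r \<longrightarrow> w x = 0) \<and> qe_on s p T (\<lambda>x. precise_rep w x \<ge> 1)} \<le> energyK K p w (ball 0 R)"
    using w by (intro Inf_lower) blast
  also have "\<dots> \<le> x" unfolding w(1) by (rule energy_mono_set)
  finally show "Inf {energyK K p w (ball 0 R) | w. w \<in> frac_sobolev s p \<and>
       (AE x in lebesgue. x \<notin> ball 0 r \<longrightarrow> w x = 0) \<and> qe_on s p T (\<lambda>x. precise_rep w x \<ge> 1)} \<le> x" .
qed

text \<open>By the localisation estimate, every competitor for cap_K(T,B_R;r) yields a competitor
  for cap_K(T) of at most (1 + C\<theta>) times its local energy.\<close>

lemma capK_le_scaled_rel:
  fixes K :: "'a::euclidean_space \<Rightarrow> real"
  assumes adm: "admissible_kernel s p \<alpha> K" and al: "0 < \<alpha>" and t: "0 < s * p" and p: "0 < p"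
    and r: "0 < r" "2 * r \<le> R"
  shows "capK K s p T
     \<le> ennreal (1 + localisation_const DIM('a) (s * p) \<alpha> * (r powr (s * p) / (R - r) powr (s * p))) * capK_rel K s p T R r"
    (is "_ \<le> ennreal ?q * _")
  unfolding capK_rel_def
proof (rule le_mult_Inf)
  have "0 \<le> localisation_const DIM('a) (s * p) \<alpha> * (r powr (s * p) / (R - r) powr (s * p))"
    using localisation_const_nonneg[OF al t] by simp
  then show "0 < ennreal ?q" by (simp del: ennreal_plus)
  show "ennreal ?q < top" by simp
  fix x assume "x \<in> {energyK K p w (ball 0 R) | w. w \<in> frac_sobolev s p \<and>
      (AE x in lebesgue. x \<notin> ball 0 r \<longrightarrow> w x = 0) \<and> qe_on s p T (\<lambda>x. precise_rep w x \<ge> 1)}"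
  then obtain w where w: "x = energyK K p w (ball 0 R)" "w \<in> frac_sobolev s p"
      "AE x in lebesgue. x \<notin> ball 0 r \<longrightarrow> w x = 0" "qe_on s p T (\<lambda>x. precise_rep w x \<ge> 1)" by blast
  have wm: "w \<in> borel_measurable lebesgue" using w(2) unfolding frac_sobolev_def by auto
  obtain v N where v: "v \<in> borel_measurable borel" "N \<in> null_sets lborel" "\<And>x. x \<notin> N \<Longrightarrow> w x = v x"
    "\<And>x. r \<le> norm x \<Longrightarrow> v x = 0"
    using borel_version_supported[OF wm w(3)] by blast
  have "capK K s p T \<le> energyK K p w UNIV"
    unfolding capK_def using w by (intro Inf_lower) blast
  also have "\<dots> = energyK K p v UNIV" by (rule energy_ae_eq[OF v(2) v(3)])
  also have "\<dots> \<le> ennreal ?q * energyK K p v (ball 0 R)"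
    by (rule energy_localisation[OF adm al t p r v(1) v(4)])
  also have "energyK K p v (ball 0 R) = x" unfolding w(1) by (rule energy_ae_eq[OF v(2) v(3), symmetric])
  finally show "capK K s p T \<le> ennreal ?q * x" .
qed

text \<open>The quantitative bound, with constant localisation_const + 1.  For R < 2r the ratio
  r^sp/(R - r)^sp exceeds 1 and the bound is implied by cap_K(T) \<le> C_K(T,B_r).\<close>

lemma capacity_defect_bound:
  fixes K :: "'a::euclidean_space \<Rightarrow> real"
  assumes adm: "admissible_kernel s p \<alpha> K" and al: "0 < \<alpha>" and t: "0 < s * p" and p: "0 < p"
    and r: "0 < r" "r < R"
  shows "capK K s p T - capK_rel K s p T R r
     \<le> ennreal ((localisation_const DIM('a) (s * p) \<alpha> + 1) * r powr (s * p) / (R - r) powr (s * p)) * CK K s p T r"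
proof -
  define C where "C = localisation_const DIM('a) (s * p) \<alpha>"
  define \<theta> where "\<theta> = r powr (s * p) / (R - r) powr (s * p)"
  have C: "0 \<le> C" unfolding C_def using al t by (rule localisation_const_nonneg)
  have thpos: "0 < \<theta>" unfolding \<theta>_def using r by simp
  have ceq: "(C + 1) * r powr (s * p) / (R - r) powr (s * p) = (C + 1) * \<theta>"
    unfolding \<theta>_def by simp
  let ?cap = "capK K s p T" and ?rel = "capK_rel K s p T R r" and ?CK = "CK K s p T r"
  have "?cap - ?rel \<le> ennreal ((C + 1) * \<theta>) * ?CK"
  proof (cases "2 * r \<le> R")
    case True
    have "?cap \<le> ennreal (1 + C * \<theta>) * ?rel"
      unfolding C_def \<theta>_def by (rule capK_le_scaled_rel[OF adm al t p r(1) True])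
    also have "\<dots> \<le> ennreal (1 + (C + 1) * \<theta>) * ?rel"
      using C thpos by (intro mult_right_mono ennreal_leI) (auto simp: distrib_right)
    also have "\<dots> = ?rel + ennreal ((C + 1) * \<theta>) * ?rel"
    proof -
      have "ennreal (1 + (C + 1) * \<theta>) = 1 + ennreal ((C + 1) * \<theta>)"
        using C thpos by (subst ennreal_plus) auto
      then show ?thesis by (simp add: distrib_right)
    qed
    finally have "?cap - ?rel \<le> ennreal ((C + 1) * \<theta>) * ?rel"
      using C thpos by (subst ennreal_minus_le_iff) (auto simp: ennreal_mult_eq_top_iff)
    also have "\<dots> \<le> ennreal ((C + 1) * \<theta>) * ?CK"
      by (intro mult_left_mono capK_rel_le_CK) auto
    finally show ?thesis .
  next
    case False
    have "(R - r) powr (s * p) \<le> r powr (s * p)" using False r t by (intro powr_mono2) auto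
    then have "1 \<le> \<theta>" unfolding \<theta>_def using r by simp
    then have "1 \<le> (C + 1) * \<theta>" using C mult_mono[of 1 "C + 1" 1 \<theta>] by simp
    have "?cap - ?rel \<le> ?CK" using capK_le_CK diff_le_self_ennreal order_trans by blast
    also have "\<dots> \<le> ennreal ((C + 1) * \<theta>) * ?CK"
      using \<open>1 \<le> (C + 1) * \<theta>\<close> mult_right_mono[of "ennreal 1" "ennreal ((C + 1) * \<theta>)" ?CK] by simp
    finally show ?thesis .
  qed
  then show ?thesis unfolding C_def[symmetric] ceq .
qed

text \<open>Choice of the parameters in the cutoff estimate: l close to 1 makes l^(1-p) e close
  to e, then R large makes the remainder small.\<close>

lemma cutoff_parameters_exist:
  fixes e a B t p Rmin :: real
  assumes ea: "e < a" and e: "0 \<le> e" and B: "0 \<le> B" and t: "0 < t"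
  shows "\<exists>l R. 0 < l \<and> l < 1 \<and> Rmin \<le> R \<and> 0 < R \<and> l powr (1 - p) * e + (1 - l) powr (1 - p) * B * R powr (-t) < a"
proof -
  define m where "m = (e + a) / 2"
  have m: "e < m" "m < a" using ea by (auto simp: m_def)
  have "((\<lambda>l::real. l powr (1 - p) * e) \<longlongrightarrow> 1 powr (1 - p) * e) (at_left 1)"
    by (intro tendsto_intros) auto
  then have ev1: "eventually (\<lambda>l::real. l powr (1 - p) * e < m) (at_left 1)"
    using m by (intro order_tendstoD(2)) auto
  have ev2: "eventually (\<lambda>l::real. l \<in> {0<..<1}) (at_left 1)"
    by (intro eventually_at_left_real) simp
  obtain l where l: "0 < l" "l < 1" "l powr (1 - p) * e < m"
    using eventually_happens[OF eventually_conj[OF ev1 ev2]] by auto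
  define A where "A = (1 - l) powr (1 - p) * B"
  have "((\<lambda>R::real. A * R powr (-t)) \<longlongrightarrow> A * 0) at_top"
    by (intro tendsto_mult tendsto_const tendsto_neg_powr filterlim_ident) (use t in simp)
  then have ev3: "eventually (\<lambda>R::real. A * R powr (-t) < a - m) at_top"
    using m by (intro order_tendstoD(2)) auto
  have ev4: "eventually (\<lambda>R::real. max Rmin 1 \<le> R) at_top" by (rule eventually_ge_at_top)
  obtain R where R: "A * R powr (-t) < a - m" "max Rmin 1 \<le> R"
    using eventually_happens[OF eventually_conj[OF ev3 ev4]] by auto
  show ?thesis
    using l R m unfolding A_def by (intro exI[of _ l] exI[of _ R]) auto
qed

lemma cut_approx:
  fixes K w :: "'a::euclidean_space \<Rightarrow> real" and a :: ennreal
  assumes adm: "admissible_kernel s p \<alpha> K" and al: "0 \<le> \<alpha>"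
    and w: "w \<in> frac_sobolev s p" and Ea: "energyK K p w UNIV < a"
    and p: "1 < p" and s: "s < 1" and t: "0 < s * p"
  shows "\<exists>R. R0 \<le> R \<and> 0 < R \<and> energyK K p (\<lambda>x. cutoff R x * w x) UNIV < a"
proof -
  let ?t = "s * p"
  define Cp where "Cp = dyadic_const DIM('a) (p - ?t) + dyadic_const DIM('a) ?t"
  have Cpnn: "0 \<le> Cp" unfolding Cp_def using t s p dyadic_const_nonneg[of "p - ?t"] dyadic_const_nonneg[of ?t]
    by (simp add: add_nonneg_nonneg)
  have wm: "w \<in> borel_measurable lebesgue" and wL: "(\<integral>\<^sup>+ x. ennreal (\<bar>w x\<bar> powr p) \<partial>lebesgue) < \<infinity>"
    using w unfolding frac_sobolev_def by auto
  define M where "M = (\<integral>\<^sup>+y. ennreal (\<bar>w y\<bar> powr p) \<partial>lborel)"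
  have Mfin: "M < top" using wL by (simp add: M_def nn_integral_completion)
  define e where "e = energyK K p w UNIV"
  have efin: "e < top" using Ea unfolding e_def using top.not_eq_extremum by fastforce
  define e' where "e' = enn2real e"
  define M' where "M' = enn2real M"
  have ee: "e = ennreal e'" and e'nn: "0 \<le> e'" using efin by (auto simp: e'_def)
  have MM: "M = ennreal M'" and M'nn: "0 \<le> M'" using Mfin by (auto simp: M'_def)
  obtain a' where a': "e' < a'" "ennreal a' \<le> a"
  proof (cases "a = top")
    case True then show ?thesis using that[of "e' + 1"] by simp
  next
    case False
    then have "e' < enn2real a" using Ea ee e'nn unfolding e_def
      by (metis enn2real_ennreal ennreal_enn2real ennreal_less_iff top.not_eq_extremum)
    then show ?thesis using that[of "enn2real a"] False by (simp add: less_top)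
  qed
  obtain l R where l: "0 < l" "l < 1" and R: "R0 \<le> R" "0 < R"
    and lR: "l powr (1 - p) * e' + (1 - l) powr (1 - p) * (\<alpha> * Cp * M') * R powr (-?t) < a'"
    using cutoff_parameters_exist[OF a'(1) e'nn _ t, where B = "\<alpha> * Cp * M'" and p = p and Rmin = R0] al Cpnn M'nn
    by auto
  have "energyK K p (\<lambda>x. cutoff R x * w x) UNIV
     \<le> ennreal (l powr (1 - p)) * e + ennreal ((1 - l) powr (1 - p) * \<alpha> * Cp * R powr (-?t)) * M"
    unfolding e_def M_def Cp_def by (rule cut_energyK[OF adm al wm l(1) l(2) p s t R(2)])
  also have "\<dots> = ennreal (l powr (1 - p) * e' + (1 - l) powr (1 - p) * (\<alpha> * Cp * M') * R powr (-?t))"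
    unfolding ee MM using al Cpnn M'nn e'nn
    by (simp add: ennreal_mult'[symmetric] ennreal_plus[symmetric] mult_ac del: ennreal_plus)
  also have "\<dots> < ennreal a'"
    using lR e'nn al Cpnn M'nn by (subst ennreal_less_iff) (auto intro!: add_nonneg_nonneg mult_nonneg_nonneg)
  also have "\<dots> \<le> a" by (rule a'(2))
  finally show ?thesis using R by auto
qed

lemma CK_le_cut_energy:
  fixes K w :: "'a::euclidean_space \<Rightarrow> real"
  assumes w: "w \<in> frac_sobolev s p" and wT: "qe_on s p T (\<lambda>x. precise_rep w x \<ge> 1)"
    and p: "1 < p" and s: "s < 1" and t: "0 < s * p"
    and R: "0 < R" and TR: "T \<subseteq> ball 0 R" and r: "2 * R \<le> r"
  shows "CK K s p T r \<le> energyK K p (\<lambda>x. cutoff R x * w x) UNIV"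
proof -
  let ?v = "\<lambda>x. cutoff R x * w x"
  have vS: "?v \<in> frac_sobolev s p" by (rule cut_sobolev[OF w p s t R])
  obtain N where N: "sp_capacity s p N = 0" "\<forall>x\<in>T - N. 1 \<le> precise_rep w x"
    using wT unfolding qe_on_def by blast
  have "\<forall>x\<in>T - N. 1 \<le> precise_rep ?v x"
  proof
    fix x assume x: "x \<in> T - N"
    then have "norm x < R" using TR by auto
    then have "precise_rep ?v x = precise_rep w x" by (rule cut_precise[OF R])
    then show "1 \<le> precise_rep ?v x" using N x by simp
  qed
  then have vT: "qe_on s p T (\<lambda>x. precise_rep ?v x \<ge> 1)" unfolding qe_on_def using N by blast
  show ?thesis
    unfolding CK_def using vS vT cut_support[OF R r, of w] by (intro Inf_lower) blast
qed

text \<open>The lower bound is capK_le_CK; for the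
  upper bound, cut off a competitor of energy < a at a radius R with T \<subseteq> B_R.\<close>

lemma CK_tendsto_capK:
  fixes K :: "'a::euclidean_space \<Rightarrow> real"
  assumes adm: "admissible_kernel s p \<alpha> K" and al: "0 \<le> \<alpha>" and bT: "bounded T"
    and p: "1 < p" and s: "s < 1" and t: "0 < s * p"
  shows "((\<lambda>r. CK K s p T r) \<longlongrightarrow> capK K s p T) at_top"
proof (rule order_tendstoI)
  fix a assume "a < capK K s p T"
  then show "eventually (\<lambda>r. a < CK K s p T r) at_top"
    using capK_le_CK[of K s p T] by (intro always_eventually) (auto intro: less_le_trans)
next
  fix a assume "capK K s p T < a"
  then obtain w where w: "w \<in> frac_sobolev s p" "qe_on s p T (\<lambda>x. precise_rep w x \<ge> 1)"
    "energyK K p w UNIV < a"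
    unfolding capK_def Inf_less_iff by blast
  obtain R0 where R0: "T \<subseteq> ball 0 R0" using bounded_subset_ballD[OF bT] by blast
  obtain R where R: "R0 \<le> R" "0 < R" "energyK K p (\<lambda>x. cutoff R x * w x) UNIV < a"
    using cut_approx[OF adm al w(1) w(3) p s t, of R0] by auto
  have TR: "T \<subseteq> ball 0 R" using R0 R(1) by auto
  show "eventually (\<lambda>r. CK K s p T r < a) at_top"
    unfolding eventually_at_top_linorder
    using CK_le_cut_energy[OF w(1,2) p s t R(2) TR] R(3) by (blast intro: le_less_trans)
qed

theorem mainTheorem7:
  fixes s p \<alpha> :: real
  assumes "DIM('a::euclidean_space) \<ge> 2"
    and "1 < p" and "0 < s" and "s < 1"
    and "1 < s * p" and "s * p < real DIM('a)"
    and "\<alpha> \<ge> 1"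
  shows "(\<forall>(K :: 'a \<Rightarrow> real) T. admissible_kernel s p \<alpha> K \<longrightarrow> bounded T \<longrightarrow>
            ((\<lambda>r. CK K s p T r) \<longlongrightarrow> capK K s p T) at_top)
       \<and> (\<exists>c>0. \<forall>(K :: 'a \<Rightarrow> real) T r R. admissible_kernel s p \<alpha> K \<longrightarrow> bounded T \<longrightarrow>
            0 < r \<longrightarrow> r < R \<longrightarrow>
            capK K s p T - capK_rel K s p T R r
              \<le> ennreal (c * r powr (s * p) / (R - r) powr (s * p)) * CK K s p T r)"
proof
  have p: "1 < p" and s: "s < 1" and t: "0 < s * p" and al: "0 < \<alpha>" using assms by auto
  show "\<forall>(K :: 'a \<Rightarrow> real) T. admissible_kernel s p \<alpha> K \<longrightarrow> bounded T \<longrightarrow>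
            ((\<lambda>r. CK K s p T r) \<longlongrightarrow> capK K s p T) at_top"
    using CK_tendsto_capK[OF _ less_imp_le[OF al] _ p s t] by blast
  let ?c = "localisation_const DIM('a) (s * p) \<alpha> + 1"
  have "0 < ?c" using localisation_const_nonneg[OF al t, of "DIM('a)"] by linarith
  moreover have "capK K s p T - capK_rel K s p T R r
      \<le> ennreal (?c * r powr (s * p) / (R - r) powr (s * p)) * CK K s p T r"
    if "admissible_kernel s p \<alpha> K" "0 < r" "r < R" for K :: "'a \<Rightarrow> real" and T r R
    using capacity_defect_bound[OF that(1) al t _ that(2,3)] p by simp
  ultimately show "\<exists>c>0. \<forall>(K :: 'a \<Rightarrow> real) T r R. admissible_kernel s p \<alpha> K \<longrightarrow> bounded T \<longrightarrow>
            0 < r \<longrightarrow> r < R \<longrightarrow>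
            capK K s p T - capK_rel K s p T R r
              \<le> ennreal (c * r powr (s * p) / (R - r) powr (s * p)) * CK K s p T r"
    by blast
qed

end
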